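(* Under the standing assumptions below, the function $h\mapsto c_*(h)=1/\sqrt{\varepsilon_0(h)}$ is $C^\infty$-smooth and strictly decreasing on $h\in[0,\infty)$. Moreover, with $$k_1=2\sqrt{\frac{p-1}{1+\frac p2\int_{\mathbb R}s^2K(s)\,ds}}-p\int_{\mathbb R}sK(s)\exp\!\Big(-s\sqrt{\frac{p-1}{1+\frac p2\int_{\mathbb R}s^2K(s)\,ds}}\Big)ds,\qquad k_2=\frac{1}{\sqrt{\ln p}}\ln\Big(p\int_{\mathbb R}K(s)e^{-\sqrt{\ln p}\,s}ds\Big),$$ one has $k_1>0$, $k_2>0$, and: 1. for $h\in[0,1]$: $$\max\Big\{2\sqrt{\tfrac{p-1}{p(2h+h^2)+1}},\ \tfrac{2\sqrt{\ln p}}{1+h}\Big\}<c_*(h)<\min\Big\{\tfrac{k_1}{1+h},\ \tfrac{k_2}{h}\Big\}$$ (where $k_2/h$ is read as $+\infty$ when $h=0$); 2. for $h\in[1,\infty)$: $$\max\Big\{2\sqrt{\tfrac{p-1}{p(2h+h^2)+1}},\ \tfrac{\sqrt{\ln p}}{h}\Big\}<c_*(h)<\min\Big\{\tfrac{k_1}{2},\ \tfrac{k_2}{\sqrt h}\Big\}.$$ Furthermore there exist constants $0<C_1<C_2$ such that $C_1/h\le c_*(h)\le C_2/h$ for all $h\ge1$.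
   Context: Let $K:\mathbb R\to[0,\infty)$ be measurable with $K(s)=K(-s)$ for all $s\in\mathbb R$, $\int_{\mathbb R}K(s)\,ds=1$, and $\int_{\mathbb R}K(s)e^{\lambda s}ds<\infty$ for every $\lambda\in\mathbb R$. Fix $p>1$. For $h\ge0$, $z\in\mathbb R$, $\varepsilon>0$ set $$\psi_h(z,\varepsilon)=\varepsilon z^2-z-1+p\,e^{-zh}\int_{\mathbb R}K(s)e^{-\sqrt{\varepsilon}\,zs}\,ds .$$ Standing fact (known, assumed): for every $h\ge0$ there is exactly one pair $(z_0(h),\varepsilon_0(h))$ with $z_0(h)>0$, $\varepsilon_0(h)>0$ satisfying $\psi_h(z_0,\varepsilon_0)=0$ and $\partial_z\psi_h(z_0,\varepsilon_0)=0$; moreover $\varepsilon_0(h)$ is the largest $\varepsilon>0$ for which $\psi_h(\cdot,\varepsilon)$ has a positive zero, and $\psi_h(z,\varepsilon)>0$ for all $z>0$ whenever $\varepsilon>\varepsilon_0(h)$. Define $c_*(h)=1/\sqrt{\varepsilon_0(h)}$ (this is the minimal speed of traveling waves for $u_t=u_{xx}-u+\int_{\mathbb R}K(x-s)g(u(t-h,s))ds$ with monostable $g$, $g'(0)=p$, $g(s)\le ps$). *)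

theory Defs
  imports "HOL-Analysis.Analysis"
begin

definition psi :: "(real \<Rightarrow> real) \<Rightarrow> real \<Rightarrow> real \<Rightarrow> real \<Rightarrow> real \<Rightarrow> real" where
  "psi K p h z \<epsilon> = \<epsilon> * z\<^sup>2 - z - 1
     + p * exp (- z * h) * (LINT s|lborel. K s * exp (- sqrt \<epsilon> * z * s))"

definition eps0 :: "(real \<Rightarrow> real) \<Rightarrow> real \<Rightarrow> real \<Rightarrow> real" where
  "eps0 K p h = (THE \<epsilon>. \<epsilon> > 0 \<and> (\<exists>z>0. psi K p h z \<epsilon> = 0 \<and> deriv (\<lambda>y. psi K p h y \<epsilon>) z = 0))"

definition cstar :: "(real \<Rightarrow> real) \<Rightarrow> real \<Rightarrow> real \<Rightarrow> real" where
  "cstar K p h = 1 / sqrt (eps0 K p h)"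

definition k1 :: "(real \<Rightarrow> real) \<Rightarrow> real \<Rightarrow> real" where
  "k1 K p = (let a = sqrt ((p - 1) / (1 + p / 2 * (LINT s|lborel. s\<^sup>2 * K s)))
             in 2 * a - p * (LINT s|lborel. s * K s * exp (- s * a)))"

definition k2 :: "(real \<Rightarrow> real) \<Rightarrow> real \<Rightarrow> real" where
  "k2 K p = 1 / sqrt (ln p) * ln (p * (LINT s|lborel. K s * exp (- sqrt (ln p) * s)))"

end

theory Submission
  imports Defs
begin

text \<open>
  Writing \<open>l = sqrt \<epsilon> * z\<close> and \<open>c = 1 / sqrt \<epsilon>\<close>, the characteristic function becomes
  \<open>psi\<^sub>h(z,\<epsilon>) = \<chi>(h,c,l) = l\<^sup>2 - c l - 1 + p exp(-lch) L\<^sub>0(l)\<close>, where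
  \<open>L\<^sub>k(b) = \<integral> (-s)\<^sup>k K(s) exp(-bs) ds\<close> is the \<open>k\<close>-th derivative of the Laplace transform of \<open>K\<close>.
  The standing facts then say: \<open>\<chi>(h, c\<^sub>*(h), \<cdot>)\<close> touches zero at a double root
  \<open>\<lambda>(h) > 0\<close>, and a single negative value \<open>\<chi>(h,c,l) < 0\<close> with \<open>l > 0\<close> forces
  \<open>c\<^sub>*(h) < c\<close>.  Upper bounds for \<open>c\<^sub>*\<close> thus follow by exhibiting one negative value
  of \<open>\<chi>\<close>, lower bounds by proving \<open>\<chi>(h,X,\<cdot>) > 0\<close>, and strict monotonicity from the fact
  that \<open>\<chi>\<close> decreases in \<open>h\<close>.

  For smoothness, \<open>c\<^sub>*\<close> is first shown Lipschitz, then differentiable by squeezing its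
  difference quotients between two one-sided estimates; \<open>\<lambda>\<close> is then differentiable by
  the mean value theorem applied to \<open>\<partial>\<chi>/\<partial>l\<close>, whose \<open>l\<close>-derivative is at least 2.  Both
  derivatives are explicit expressions in \<open>\<lambda>(h), c\<^sub>*(h), h\<close> and \<open>L\<^sub>k(\<lambda>(h))\<close>; a small
  syntax of such expressions, closed under symbolic differentiation, yields
  derivatives of every order.
\<close>

section \<open>Elementary real analysis\<close>

text \<open>Powers are dominated by the exponential; this makes every moment
  \<open>s\<^sup>k K(s) exp(bs)\<close> integrable.\<close>
lemma pow_le_fact_exp:
  fixes x :: real assumes "0 \<le> x" shows "x ^ k \<le> fact k * exp x"
proof -
  obtain t where t: "exp x = (\<Sum>m<Suc k. x ^ m / fact m) + exp t / fact (Suc k) * x ^ Suc k"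
    using Maclaurin_exp_le[of x "Suc k"] by blast
  have "x ^ k / fact k \<le> (\<Sum>m<Suc k. x ^ m / fact m)"
    by (rule member_le_sum) (use assms in auto)
  moreover have "0 \<le> exp t / fact (Suc k) * x ^ Suc k" using assms by simp
  ultimately have "x ^ k / fact k \<le> exp x" using t by linarith
  then show ?thesis by (simp add: divide_simps mult.commute)
qed

lemma abs_pow_le_exp:
  fixes x :: real shows "\<bar>x\<bar> ^ k \<le> fact k * (exp x + exp (- x))"
proof -
  have "\<bar>x\<bar> ^ k \<le> fact k * exp \<bar>x\<bar>" by (rule pow_le_fact_exp) simp
  also have "exp \<bar>x\<bar> \<le> exp x + exp (-x)" by (cases "x \<ge> 0") auto
  hence "fact k * exp \<bar>x\<bar> \<le> fact k * (exp x + exp (- x))" by simp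
  finally show ?thesis .
qed

text \<open>The weight that dominates the second-order Taylor remainder of \<open>L\<^sub>k\<close>.\<close>
lemma abs_pow_sq_exp_le:
  fixes s :: real
  shows "\<bar>s\<bar> ^ k * (s\<^sup>2 * exp \<bar>s\<bar>) \<le> fact (k + 2) * (exp (2 * s) + 2 + exp (- 2 * s))"
proof -
  have "\<bar>s\<bar> ^ k * (s\<^sup>2 * exp \<bar>s\<bar>) = \<bar>s\<bar> ^ (k + 2) * exp \<bar>s\<bar>"
    by (simp add: power_add power2_abs power2_eq_square)
  also have "\<dots> \<le> (fact (k + 2) * (exp s + exp (- s))) * (exp s + exp (- s))"
  proof (rule mult_mono)
    show "\<bar>s\<bar> ^ (k + 2) \<le> fact (k + 2) * (exp s + exp (- s))" by (rule abs_pow_le_exp)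
    show "exp \<bar>s\<bar> \<le> exp s + exp (- s)" by (cases "s \<ge> 0") auto
  qed auto
  also have "\<dots> = fact (k + 2) * (exp (2 * s) + 2 + exp (- 2 * s))"
  proof -
    have "(exp s + exp (- s)) * (exp s + exp (- s)) = exp (2 * s) + 2 + exp (- 2 * s)"
      by (simp add: algebra_simps flip: exp_add)
    thus ?thesis by simp
  qed
  finally show ?thesis .
qed

lemma exp_taylor2_bound:
  fixes x :: real shows "\<bar>exp x - 1 - x\<bar> \<le> x\<^sup>2 * exp \<bar>x\<bar>"
proof -
  obtain t where t: "\<bar>t\<bar> \<le> \<bar>x\<bar>" "exp x = (\<Sum>m<2. x ^ m / fact m) + exp t / fact 2 * x ^ 2"
    using Maclaurin_exp_le[of x 2] by blast
  have e: "exp x - 1 - x = exp t / 2 * x\<^sup>2" using t(2) by (simp add: numeral_2_eq_2)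
  have "exp t \<le> exp \<bar>x\<bar>" using t(1) by simp
  hence "exp t / 2 \<le> exp \<bar>x\<bar>" using exp_gt_zero[of t] by linarith
  hence "exp t / 2 * x\<^sup>2 \<le> exp \<bar>x\<bar> * x\<^sup>2" by (rule mult_right_mono) simp
  hence "exp t / 2 * x\<^sup>2 \<le> x\<^sup>2 * exp \<bar>x\<bar>" by (simp only: mult.commute)
  thus ?thesis unfolding e by (simp add: abs_of_nonneg)
qed

lemma has_real_derivative_quadratic_remainder:
  fixes f :: "real \<Rightarrow> real"
  assumes q: "\<And>t. \<bar>t\<bar> \<le> 1 \<Longrightarrow> \<bar>f (x + t) - f x - t * D\<bar> \<le> C * t\<^sup>2"
  shows "(f has_real_derivative D) (at x)"
proof -
  have "((\<lambda>t. (f (x + t) - f x) / t - D) \<longlongrightarrow> 0) (at 0)"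
  proof (rule Lim_null_comparison)
    show "\<forall>\<^sub>F t in at 0. norm ((f (x + t) - f x) / t - D) \<le> \<bar>C\<bar> * \<bar>t\<bar>"
      unfolding eventually_at
    proof (intro exI[of _ 1] conjI allI ballI impI)
      fix t :: real assume "t \<noteq> 0 \<and> dist t 0 < 1"
      hence t0: "t \<noteq> 0" and t1: "\<bar>t\<bar> \<le> 1" by auto
      have "norm ((f (x + t) - f x) / t - D) = \<bar>f (x + t) - f x - t * D\<bar> / \<bar>t\<bar>"
        using t0 by (simp add: field_simps)
      also have "\<dots> \<le> C * t\<^sup>2 / \<bar>t\<bar>" using q[OF t1] by (simp add: divide_right_mono)
      also have "\<dots> = C * \<bar>t\<bar>" using t0 by (simp add: power2_eq_square field_simps abs_mult_self_eq)
      also have "\<dots> \<le> \<bar>C\<bar> * \<bar>t\<bar>" by (simp add: mult_right_mono)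
      finally show "norm ((f (x + t) - f x) / t - D) \<le> \<bar>C\<bar> * \<bar>t\<bar>" .
    qed simp
    show "((\<lambda>t. \<bar>C\<bar> * \<bar>t\<bar>) \<longlongrightarrow> 0) (at 0)"
      by (rule tendsto_eq_intros refl | simp)+
  qed
  thus ?thesis by (simp add: DERIV_def LIM_zero_iff)
qed

text \<open>The inequality \<open>cosh x - x sinh x < 1 - x\<^sup>2/2\<close> for \<open>x \<noteq> 0\<close>; integrated
  against the kernel it gives the inequality behind \<open>k\<^sub>1\<close>.\<close>
lemma cosh_sinh_gap_pos_pos:
  fixes x :: real assumes x: "0 < x"
  shows "0 < 1 - x\<^sup>2 / 2 - cosh x + x * sinh x"
proof -
  define f where "f y = 1 - y\<^sup>2 / 2 - cosh y + y * sinh y" for y :: real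
  have d: "(f has_real_derivative y * (cosh y - 1)) (at y)" for y
    unfolding f_def by (auto intro!: derivative_eq_intros simp: algebra_simps)
  obtain z where z: "0 < z" "z < x" "f x - f 0 = (x - 0) * (z * (cosh z - 1))"
    using MVT2[OF x, of f "\<lambda>y. y * (cosh y - 1)"] d by blast
  have "cosh 0 < cosh z" using z by (intro cosh_real_strict_mono) auto
  hence "0 < f x - f 0" using z x by simp
  thus ?thesis by (simp add: f_def)
qed

lemma cosh_sinh_gap_pos:
  fixes x :: real assumes "x \<noteq> 0"
  shows "0 < 1 - x\<^sup>2 / 2 - cosh x + x * sinh x"
  using cosh_sinh_gap_pos_pos[of x] cosh_sinh_gap_pos_pos[of "- x"] assms
  by (cases "x > 0") auto

lemma nonneg_of_convex_touching:
  fixes f f' f'' :: "real \<Rightarrow> real"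
  assumes d1: "\<And>y. (f has_real_derivative f' y) (at y)"
    and d2: "\<And>y. (f' has_real_derivative f'' y) (at y)"
    and pos: "\<And>y. 0 \<le> f'' y" and f0: "f x = 0" and f'0: "f' x = 0"
  shows "0 \<le> f y"
proof (cases rule: linorder_cases[of y x])
  case less
  obtain \<xi> where \<xi>: "y < \<xi>" "\<xi> < x" "f x - f y = (x - y) * f' \<xi>"
    using MVT2[OF less, of f f'] d1 by blast
  obtain \<eta> where \<eta>: "\<xi> < \<eta>" "\<eta> < x" "f' x - f' \<xi> = (x - \<xi>) * f'' \<eta>"
    using MVT2[OF \<xi>(2), of f' f''] d2 by blast
  have "f' \<xi> \<le> 0" using \<xi> \<eta> pos[of \<eta>] f'0 by (smt (verit) mult_nonneg_nonneg)
  thus ?thesis using \<xi> less f0 by (smt (verit) mult_nonneg_nonpos)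
next
  case equal thus ?thesis using f0 by simp
next
  case greater
  obtain \<xi> where \<xi>: "x < \<xi>" "\<xi> < y" "f y - f x = (y - x) * f' \<xi>"
    using MVT2[OF greater, of f f'] d1 by blast
  obtain \<eta> where \<eta>: "x < \<eta>" "\<eta> < \<xi>" "f' \<xi> - f' x = (\<xi> - x) * f'' \<eta>"
    using MVT2[OF \<xi>(1), of f' f''] d2 by blast
  have "0 \<le> f' \<xi>" using \<xi> \<eta> pos[of \<eta>] f'0 by (smt (verit) mult_nonneg_nonneg)
  thus ?thesis using \<xi> greater f0 by (smt (verit) mult_nonneg_nonneg)
qed

lemma exp_neg_diff_le:
  fixes x y :: real assumes "0 \<le> x" "x \<le> y"
  shows "exp (- x) - exp (- y) \<le> y - x"
proof -
  have "exp (- x) - exp (- y) = exp (- x) * (1 - exp (- (y - x)))"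
    by (simp add: algebra_simps flip: exp_add)
  also have "\<dots> \<le> 1 * (1 - exp (- (y - x)))"
    using assms by (intro mult_right_mono) auto
  also have "\<dots> \<le> y - x"
    using exp_ge_add_one_self[of "- (y - x)"] by (simp only: mult.left_neutral)
  finally show ?thesis .
qed

lemma exp_neg_abs_diff_le:
  fixes x y :: real assumes "0 \<le> x" "0 \<le> y"
  shows "\<bar>exp (- x) - exp (- y)\<bar> \<le> \<bar>x - y\<bar>"
  using exp_neg_diff_le[OF assms(1), of y] exp_neg_diff_le[OF assms(2), of x]
  by (cases "x \<le> y") auto

lemma mvt_near:
  fixes f f' :: "real \<Rightarrow> real"
  assumes d: "\<And>y. (f has_real_derivative f' y) (at y)"
  shows "\<exists>\<eta>. f b - f a = (b - a) * f' \<eta> \<and> \<bar>\<eta> - a\<bar> \<le> \<bar>b - a\<bar>"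
proof (cases rule: linorder_cases[of a b])
  case less
  obtain \<eta> where "a < \<eta>" "\<eta> < b" "f b - f a = (b - a) * f' \<eta>"
    using MVT2[OF less, of f f'] d by blast
  thus ?thesis by (intro exI[of _ \<eta>]) auto
next
  case equal thus ?thesis by (intro exI[of _ a]) simp
next
  case greater
  obtain \<eta> where "b < \<eta>" "\<eta> < a" "f a - f b = (a - b) * f' \<eta>"
    using MVT2[OF greater, of f f'] d by blast
  thus ?thesis by (intro exI[of _ \<eta>]) (auto simp: algebra_simps)
qed

lemma mvt_points_tendsto:
  fixes g g' :: "'a \<Rightarrow> real \<Rightarrow> real" and x :: "'a \<Rightarrow> real"
  assumes d: "\<And>y t. (g y has_real_derivative g' y t) (at t)" and x: "(x \<longlongrightarrow> a) F"
  obtains \<eta> where "\<And>y. g y (x y) - g y a = (x y - a) * g' y (\<eta> y)" "(\<eta> \<longlongrightarrow> a) F"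
proof -
  define \<eta> where "\<eta> y = (SOME t. g y (x y) - g y a = (x y - a) * g' y t \<and> \<bar>t - a\<bar> \<le> \<bar>x y - a\<bar>)" for y
  have \<eta>: "g y (x y) - g y a = (x y - a) * g' y (\<eta> y) \<and> \<bar>\<eta> y - a\<bar> \<le> \<bar>x y - a\<bar>" for y
    unfolding \<eta>_def by (rule someI_ex, rule mvt_near, rule d)
  have "((\<lambda>y. \<eta> y - a) \<longlongrightarrow> 0) F"
  proof (rule Lim_null_comparison)
    show "\<forall>\<^sub>F y in F. norm (\<eta> y - a) \<le> \<bar>x y - a\<bar>" using \<eta> by (intro always_eventually allI) simp
    show "((\<lambda>y. \<bar>x y - a\<bar>) \<longlongrightarrow> 0) F"
      using tendsto_rabs[OF tendsto_diff[OF x tendsto_const[of a]]] by simp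
  qed
  then show ?thesis using \<eta> by (intro that) (auto simp: LIM_zero_iff)
qed

lemma exp_neg_secant:
  fixes u v :: real
  shows "\<exists>T. exp (- v) - exp (- u) = - T * (v - u) \<and> \<bar>T - exp (- u)\<bar> \<le> \<bar>exp (- v) - exp (- u)\<bar> \<and> T > 0"
proof -
  have d: "((\<lambda>t. exp (- t)) has_real_derivative - exp (- t)) (at t)" for t
    by (auto intro!: derivative_eq_intros)
  show ?thesis
  proof (cases rule: linorder_cases[of u v])
    case equal thus ?thesis by (intro exI[of _ "exp (- u)"]) simp
  next
    case less
    obtain \<xi> where \<xi>: "u < \<xi>" "\<xi> < v" "exp (- v) - exp (- u) = (v - u) * (- exp (- \<xi>))"
      using MVT2[OF less, of "\<lambda>t. exp (- t)" "\<lambda>t. - exp (- t)"] d by blast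
    have "exp (- v) \<le> exp (- \<xi>)" "exp (- \<xi>) \<le> exp (- u)" using \<xi> by auto
    thus ?thesis using \<xi> by (intro exI[of _ "exp (- \<xi>)"]) (auto simp: algebra_simps)
  next
    case greater
    obtain \<xi> where \<xi>: "v < \<xi>" "\<xi> < u" "exp (- u) - exp (- v) = (u - v) * (- exp (- \<xi>))"
      using MVT2[OF greater, of "\<lambda>t. exp (- t)" "\<lambda>t. - exp (- t)"] d by blast
    have "exp (- u) \<le> exp (- \<xi>)" "exp (- \<xi>) \<le> exp (- v)" using \<xi> by auto
    thus ?thesis using \<xi> by (intro exI[of _ "exp (- \<xi>)"]) (auto simp: algebra_simps)
  qed
qed

lemma exp_neg_secant_slopes:
  fixes u v :: "'a \<Rightarrow> real"
  assumes u: "(u \<longlongrightarrow> a) F" and v: "(v \<longlongrightarrow> a) F"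
  obtains T where "\<And>y. T y > 0" "\<And>y. exp (- u y) - exp (- v y) = - T y * (u y - v y)"
    "(T \<longlongrightarrow> exp (- a)) F"
proof -
  define T where "T y = (SOME T. exp (- u y) - exp (- v y) = - T * (u y - v y)
      \<and> \<bar>T - exp (- v y)\<bar> \<le> \<bar>exp (- u y) - exp (- v y)\<bar> \<and> T > 0)" for y
  have T: "exp (- u y) - exp (- v y) = - T y * (u y - v y)
      \<and> \<bar>T y - exp (- v y)\<bar> \<le> \<bar>exp (- u y) - exp (- v y)\<bar> \<and> T y > 0" for y
    unfolding T_def by (rule someI_ex, rule exp_neg_secant)
  have exps: "((\<lambda>y. exp (- u y)) \<longlongrightarrow> exp (- a)) F" "((\<lambda>y. exp (- v y)) \<longlongrightarrow> exp (- a)) F"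
    by (intro tendsto_intros u v)+
  have "((\<lambda>y. T y - exp (- v y)) \<longlongrightarrow> 0) F"
  proof (rule Lim_null_comparison)
    show "\<forall>\<^sub>F y in F. norm (T y - exp (- v y)) \<le> \<bar>exp (- u y) - exp (- v y)\<bar>"
      using T unfolding real_norm_def by (intro always_eventually allI) blast
    show "((\<lambda>y. \<bar>exp (- u y) - exp (- v y)\<bar>) \<longlongrightarrow> 0) F"
      using tendsto_rabs[OF tendsto_diff[OF exps]] by simp
  qed
  from tendsto_add[OF this exps(2)] have "(T \<longlongrightarrow> exp (- a)) F" by simp
  then show ?thesis using T by (intro that) auto
qed

lemma has_real_derivative_squeeze:
  fixes f r1 r2 :: "real \<Rightarrow> real"
  assumes between: "\<And>y. y \<in> S \<Longrightarrow> y \<noteq> x \<Longrightarrow>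
      min (r1 y) (r2 y) \<le> (f y - f x) / (y - x) \<and> (f y - f x) / (y - x) \<le> max (r1 y) (r2 y)"
    and r1: "(r1 \<longlongrightarrow> D) (at x within S)" and r2: "(r2 \<longlongrightarrow> D) (at x within S)"
  shows "(f has_real_derivative D) (at x within S)"
proof -
  have "((\<lambda>y. (f y - f x) / (y - x) - D) \<longlongrightarrow> 0) (at x within S)"
  proof (rule Lim_null_comparison)
    show "\<forall>\<^sub>F y in at x within S. norm ((f y - f x) / (y - x) - D) \<le> \<bar>r1 y - D\<bar> + \<bar>r2 y - D\<bar>"
      unfolding eventually_at_filter
      by (intro always_eventually allI impI, drule (1) between) (auto simp: min_def max_def split: if_splits)
    have "((\<lambda>y. \<bar>r1 y - D\<bar> + \<bar>r2 y - D\<bar>) \<longlongrightarrow> \<bar>D - D\<bar> + \<bar>D - D\<bar>) (at x within S)"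
      by (intro tendsto_intros r1 r2)
    thus "((\<lambda>y. \<bar>r1 y - D\<bar> + \<bar>r2 y - D\<bar>) \<longlongrightarrow> 0) (at x within S)" by simp
  qed
  thus ?thesis by (simp add: has_field_derivative_iff LIM_zero_iff)
qed

text \<open>The algebraic core of the squeeze for \<open>c\<^sub>*\<close>: two linear inequalities for an increment
  \<open>D\<close> over a step \<open>\<Delta>\<close> trap the quotient \<open>D/\<Delta>\<close> between two explicit values.\<close>
lemma quotient_between:
  fixes D \<Delta> A1 A2 c h :: real
  assumes "\<Delta> \<noteq> 0" "A1 \<ge> 0" "A2 \<ge> 0" "h \<ge> 0"
    and i1: "D * (1 + A1 * h) + A1 * c * \<Delta> \<le> 0"
    and i2: "0 \<le> D * (1 + A2 * h) + A2 * c * \<Delta>"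
  defines "r1 \<equiv> - (A1 * c) / (1 + A1 * h)" and "r2 \<equiv> - (A2 * c) / (1 + A2 * h)"
  shows "min r1 r2 \<le> D / \<Delta> \<and> D / \<Delta> \<le> max r1 r2"
proof -
  have p1: "1 + A1 * h > 0" and p2: "1 + A2 * h > 0" using assms by (simp_all add: add_pos_nonneg)
  have d1: "D \<le> r1 * \<Delta>" using i1 p1 unfolding r1_def by (simp add: field_simps)
  have d2: "r2 * \<Delta> \<le> D" using i2 p2 unfolding r2_def by (simp add: field_simps)
  have "(r2 \<le> D / \<Delta> \<and> D / \<Delta> \<le> r1) \<or> (r1 \<le> D / \<Delta> \<and> D / \<Delta> \<le> r2)"
  proof (cases "\<Delta> > 0")
    case True thus ?thesis using d1 d2 by (simp add: le_divide_eq divide_le_eq)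
  next
    case False
    hence "\<Delta> < 0" using assms(1) by simp
    thus ?thesis using d1 d2 by (simp add: le_divide_eq divide_le_eq)
  qed
  thus ?thesis by (auto simp: min_le_iff_disj le_max_iff_disj)
qed

lemma sq_one_minus_half_le_exp:
  fixes x :: real assumes "x \<le> 2"
  shows "(1 - x / 2)\<^sup>2 \<le> exp (- x)"
proof -
  have "1 - x / 2 \<le> exp (- (x / 2))" using exp_ge_add_one_self[of "- (x / 2)"] by simp
  moreover have "0 \<le> 1 - x / 2" using assms by simp
  ultimately have "(1 - x / 2)\<^sup>2 \<le> (exp (- (x / 2)))\<^sup>2" by (rule power_mono)
  also have "\<dots> = exp (- x)" by (simp add: power2_eq_square flip: exp_add)
  finally show ?thesis .
qed

lemma quadratic_nonneg_of_zero_discriminant: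
  fixes A B C l :: real assumes A: "A > 0" and d: "B\<^sup>2 = 4 * A * C"
  shows "0 \<le> A * l\<^sup>2 - B * l + C"
proof -
  have "4 * A * (A * l\<^sup>2 - B * l + C) = (2 * A * l - B)\<^sup>2"
    using d by (simp add: power2_eq_square algebra_simps)
  hence "0 \<le> 4 * A * (A * l\<^sup>2 - B * l + C)" by simp
  thus ?thesis using A by (simp add: zero_le_mult_iff)
qed


text \<open>For \<open>X\<^sup>2 (p(2h+h\<^sup>2)+1) = 4(p-1)\<close> the polynomial below is a perfect square times a
  positive constant (its discriminant vanishes).\<close>
lemma lower_bound_polynomial_nonneg:
  fixes p h X y :: real
  assumes p: "p > 1" and X2: "X\<^sup>2 * (p * (2 * h + h\<^sup>2) + 1) = 4 * (p - 1)"
  shows "0 \<le> y\<^sup>2 - X * y - 1 + p * (1 - X * h * y / 2)\<^sup>2"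
proof -
  define A where "A = 1 + p * (X * h)\<^sup>2 / 4"
  define B where "B = X + p * (X * h)"
  have A0: "A > 0" unfolding A_def using p by (simp add: add_pos_nonneg)
  have "B\<^sup>2 - 4 * A * (p - 1) = X\<^sup>2 * (p * (2 * h + h\<^sup>2) + 1) - 4 * (p - 1)"
    unfolding A_def B_def by (simp add: power2_eq_square algebra_simps)
  hence "B\<^sup>2 = 4 * A * (p - 1)" using X2 by simp
  from quadratic_nonneg_of_zero_discriminant[OF A0 this, of y]
  show ?thesis unfolding A_def B_def by (simp add: power2_eq_square algebra_simps)
qed

text \<open>For \<open>X h l \<le> 2\<close> use
  \<open>exp(-x) \<ge> (1 - x/2)\<^sup>2\<close>; beyond, the quadratic part alone is already nonnegative.\<close>
lemma lower_bound_exp_nonneg: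
  fixes p h X l :: real
  assumes p: "p > 1" and h: "0 \<le> h" and X0: "X > 0" and l: "l > 0"
    and X2: "X\<^sup>2 * (p * (2 * h + h\<^sup>2) + 1) = 4 * (p - 1)"
  shows "0 \<le> l\<^sup>2 - X * l - 1 + p * exp (- l * X * h)"
proof (cases "X * h * l \<le> 2")
  case True
  have "p * (1 - X * h * l / 2)\<^sup>2 \<le> p * exp (- (X * h * l))"
    using sq_one_minus_half_le_exp[OF True] p by simp
  thus ?thesis using lower_bound_polynomial_nonneg[OF p X2, of l] by (simp add: mult_ac)
next
  case False
  define a where "a = X * h"
  have "h \<noteq> 0" using False by auto
  hence a0: "a > 0" using h X0 unfolding a_def by simp
  define l0 where "l0 = 2 / a"
  have l0l: "l0 < l" unfolding l0_def a_def using False a0 by (simp add: divide_less_eq mult.commute a_def)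
  have "0 \<le> l0\<^sup>2 - X * l0 - 1 + p * (1 - X * h * l0 / 2)\<^sup>2"
    by (rule lower_bound_polynomial_nonneg[OF p X2])
  moreover have "1 - X * h * l0 / 2 = 0" unfolding l0_def a_def[symmetric] using a0 by simp
  ultimately have q0: "0 \<le> l0\<^sup>2 - X * l0 - 1" by simp
  have "0 \<le> p * (2 * h + h\<^sup>2)" using p h by simp
  hence D: "p * (2 * h + h\<^sup>2) + 1 > 0" by simp
  have "(p - 1) * h \<le> p * (2 * h + h\<^sup>2) + 1" using p h by (simp add: algebra_simps add_nonneg_nonneg)
  hence "4 * ((p - 1) * h) \<le> 4 * (p * (2 * h + h\<^sup>2) + 1)" by simp
  moreover have "X\<^sup>2 * (p * (2 * h + h\<^sup>2) + 1) * h = 4 * ((p - 1) * h)" by (simp only: X2 mult.assoc)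
  ultimately have "(X\<^sup>2 * h) * (p * (2 * h + h\<^sup>2) + 1) \<le> 4 * (p * (2 * h + h\<^sup>2) + 1)"
    by (metis mult.commute mult.assoc)
  hence "X\<^sup>2 * h \<le> 4" using D by (simp only: mult_le_cancel_right_pos)
  hence "X * a \<le> 4" unfolding a_def by (simp add: power2_eq_square mult.assoc)
  hence X_l0: "X \<le> 2 * l0" unfolding l0_def using a0 by (simp add: le_divide_eq mult.commute)
  have "l\<^sup>2 - X * l - 1 - (l0\<^sup>2 - X * l0 - 1) = (l - l0) * (l + l0 - X)"
    by (simp add: power2_eq_square algebra_simps)
  also have "\<dots> \<ge> 0" using l0l X_l0 by simp
  finally have "0 \<le> l\<^sup>2 - X * l - 1" using q0 by simp
  moreover have "0 \<le> p * exp (- l * X * h)" using p by simp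
  ultimately show ?thesis by simp
qed

section \<open>Expressions in \<open>\<lambda>\<close>, \<open>c\<close>, \<open>h\<close> and their symbolic derivatives\<close>

text \<open>Terms built from three variables (to be instantiated by \<open>\<lambda>(h)\<close>, \<open>c\<^sub>*(h)\<close> and \<open>h\<close>),
  constants, ring operations, \<open>exp\<close>, inverses and a family \<open>Lap k\<close> of functions with
  \<open>Lap k' = Lap (k+1)\<close>.\<close>
datatype sexpr = V_lam | V_c | V_h | Const real | Plus sexpr sexpr | Times sexpr sexpr
  | Uminus sexpr | Exp sexpr | Lap nat sexpr | Inverse sexpr

primrec sval :: "(nat \<Rightarrow> real \<Rightarrow> real) \<Rightarrow> real \<Rightarrow> real \<Rightarrow> real \<Rightarrow> sexpr \<Rightarrow> real" where
  "sval Lf l c h V_lam = l"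
| "sval Lf l c h V_c = c"
| "sval Lf l c h V_h = h"
| "sval Lf l c h (Const r) = r"
| "sval Lf l c h (Plus a b) = sval Lf l c h a + sval Lf l c h b"
| "sval Lf l c h (Times a b) = sval Lf l c h a * sval Lf l c h b"
| "sval Lf l c h (Uminus a) = - sval Lf l c h a"
| "sval Lf l c h (Exp a) = exp (sval Lf l c h a)"
| "sval Lf l c h (Lap k a) = Lf k (sval Lf l c h a)"
| "sval Lf l c h (Inverse a) = inverse (sval Lf l c h a)"

text \<open>Symbolic derivative with respect to \<open>h\<close>, given expressions \<open>dl\<close>, \<open>dc\<close> for the
  derivatives of the first two variables.\<close>
primrec sderiv :: "sexpr \<Rightarrow> sexpr \<Rightarrow> sexpr \<Rightarrow> sexpr" where
  "sderiv dl dc V_lam = dl"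
| "sderiv dl dc V_c = dc"
| "sderiv dl dc V_h = Const 1"
| "sderiv dl dc (Const r) = Const 0"
| "sderiv dl dc (Plus a b) = Plus (sderiv dl dc a) (sderiv dl dc b)"
| "sderiv dl dc (Times a b) = Plus (Times (sderiv dl dc a) b) (Times a (sderiv dl dc b))"
| "sderiv dl dc (Uminus a) = Uminus (sderiv dl dc a)"
| "sderiv dl dc (Exp a) = Times (Exp a) (sderiv dl dc a)"
| "sderiv dl dc (Lap k a) = Times (Lap (Suc k) a) (sderiv dl dc a)"
| "sderiv dl dc (Inverse a) = Uminus (Times (Times (Inverse a) (Inverse a)) (sderiv dl dc a))"

text \<open>The subterms that get inverted; differentiability requires them to be nonzero.\<close>
primrec inverted :: "sexpr \<Rightarrow> sexpr set" where
  "inverted V_lam = {}"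
| "inverted V_c = {}"
| "inverted V_h = {}"
| "inverted (Const r) = {}"
| "inverted (Plus a b) = inverted a \<union> inverted b"
| "inverted (Times a b) = inverted a \<union> inverted b"
| "inverted (Uminus a) = inverted a"
| "inverted (Exp a) = inverted a"
| "inverted (Lap k a) = inverted a"
| "inverted (Inverse a) = insert a (inverted a)"

lemma inverted_sderiv_iter:
  "inverted ((sderiv dl dc ^^ n) e) \<subseteq> inverted e \<union> inverted dl \<union> inverted dc"
proof (induction n)
  case (Suc n)
  have "inverted (sderiv dl dc e') \<subseteq> inverted e' \<union> inverted dl \<union> inverted dc" for e'
    by (induction e') auto
  thus ?case using Suc by (auto dest!: subsetD)
qed auto

lemma sval_has_derivative:
  fixes Lf :: "nat \<Rightarrow> real \<Rightarrow> real" and lf cf :: "real \<Rightarrow> real"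
  assumes Lder: "\<And>k x. (Lf k has_real_derivative Lf (Suc k) x) (at x)"
    and dl: "(lf has_real_derivative sval Lf (lf h) (cf h) h dl) (at h within S)"
    and dc: "(cf has_real_derivative sval Lf (lf h) (cf h) h dc) (at h within S)"
  shows "(\<forall>a\<in>inverted e. sval Lf (lf h) (cf h) h a \<noteq> 0) \<Longrightarrow>
    ((\<lambda>y. sval Lf (lf y) (cf y) y e) has_real_derivative sval Lf (lf h) (cf h) h (sderiv dl dc e))
      (at h within S)"
proof (induction e)
  case V_lam thus ?case using dl by simp
next
  case V_c thus ?case using dc by simp
next
  case V_h thus ?case by (simp add: DERIV_ident)
next
  case (Const r) thus ?case by simp
next
  case (Plus a b) thus ?case by (auto intro!: derivative_eq_intros)
next
  case (Times a b) thus ?case by (auto intro!: derivative_eq_intros simp: mult.commute)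
next
  case (Uminus a) thus ?case by (auto intro!: derivative_eq_intros)
next
  case (Exp a) thus ?case by (auto intro!: derivative_eq_intros simp: mult.commute)
next
  case (Lap k a)
  hence "((\<lambda>y. sval Lf (lf y) (cf y) y a) has_real_derivative sval Lf (lf h) (cf h) h (sderiv dl dc a))
      (at h within S)" by simp
  from DERIV_chain2[OF Lder this] show ?case by simp
next
  case (Inverse a)
  hence nz: "sval Lf (lf h) (cf h) h a \<noteq> 0" by simp
  from Inverse have "((\<lambda>y. sval Lf (lf y) (cf y) y a) has_real_derivative sval Lf (lf h) (cf h) h (sderiv dl dc a))
      (at h within S)" by simp
  from DERIV_inverse_fun[OF this nz] show ?case by (simp add: power2_eq_square mult_ac)
qed


section \<open>Integrals against the kernel\<close>

lemma lborel_integral_reflect: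
  fixes f :: "real \<Rightarrow> real" shows "(LINT s|lborel. f s) = (LINT s|lborel. f (- s))"
  using lborel_integral_real_affine[of "-1" f 0] by simp

lemma lborel_integrable_reflect:
  fixes f :: "real \<Rightarrow> real" shows "integrable lborel f \<Longrightarrow> integrable lborel (\<lambda>s. f (- s))"
  using lborel_integrable_real_affine[of f "-1" 0] by simp

lemma integral_diff_scaled:
  fixes f g :: "real \<Rightarrow> real"
  assumes "integrable lborel f" "integrable lborel g"
  shows "(LINT s|lborel. f s) - c * (LINT s|lborel. g s) = (LINT s|lborel. f s - c * g s)"
  using Bochner_Integration.integral_diff[OF assms(1) integrable_mult_right[OF assms(2)], of c]
  by simp

text \<open>The standing hypotheses on the kernel and the two standing facts about \<open>\<epsilon>\<^sub>0\<close>
  that the proof uses.\<close>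
locale wave_kernel =
  fixes K :: "real \<Rightarrow> real" and p :: real
  assumes K_meas: "K \<in> borel_measurable lborel"
    and K_nonneg: "\<And>s. K s \<ge> 0"
    and K_sym: "\<And>s. K s = K (- s)"
    and K_int: "integrable lborel K" and K_one: "(LINT s|lborel. K s) = 1"
    and K_exp: "\<And>l. integrable lborel (\<lambda>s. K s * exp (l * s))"
    and p_gt: "p > 1"
    and standing_unique: "\<And>h. h \<ge> 0 \<Longrightarrow> \<exists>!(z, \<epsilon>). z > 0 \<and> \<epsilon> > 0 \<and> psi K p h z \<epsilon> = 0
                 \<and> deriv (\<lambda>y. psi K p h y \<epsilon>) z = 0"
    and standing_pos: "\<And>h \<epsilon> z. h \<ge> 0 \<Longrightarrow> \<epsilon> > eps0 K p h \<Longrightarrow> z > 0 \<Longrightarrow> psi K p h z \<epsilon> > 0"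
begin

lemma integrable_moment: "integrable lborel (\<lambda>s. s ^ k * K s * exp (b * s))"
proof (rule Bochner_Integration.integrable_bound)
  show "integrable lborel (\<lambda>s. fact k * (K s * exp ((b + 1) * s)) + fact k * (K s * exp ((b - 1) * s)))"
    using K_exp by auto
  show "(\<lambda>s. s ^ k * K s * exp (b * s)) \<in> borel_measurable lborel"
    using K_meas by measurable
  show "AE x in lborel. norm (x ^ k * K x * exp (b * x))
       \<le> norm (fact k * (K x * exp ((b + 1) * x)) + fact k * (K x * exp ((b - 1) * x)))"
  proof (rule AE_I2)
    fix x
    have K0: "K x \<ge> 0" by (rule K_nonneg)
    have "norm (x ^ k * K x * exp (b * x)) = \<bar>x\<bar> ^ k * (K x * exp (b * x))"
      using K0 by (simp add: abs_mult power_abs)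
    also have "\<dots> \<le> fact k * (exp x + exp (- x)) * (K x * exp (b * x))"
      by (rule mult_right_mono[OF abs_pow_le_exp]) (use K0 in simp)
    also have "\<dots> = fact k * (K x * exp ((b + 1) * x)) + fact k * (K x * exp ((b - 1) * x))"
      by (simp add: algebra_simps flip: exp_add)
    also have "\<dots> = norm (fact k * (K x * exp ((b + 1) * x)) + fact k * (K x * exp ((b - 1) * x)))"
      using K0 by simp
    finally show "norm (x ^ k * K x * exp (b * x))
       \<le> norm (fact k * (K x * exp ((b + 1) * x)) + fact k * (K x * exp ((b - 1) * x)))" .
  qed
qed

definition L :: "nat \<Rightarrow> real \<Rightarrow> real" where
  "L k b = (LINT s|lborel. (- s) ^ k * K s * exp (- b * s))"

lemma integrable_L: "integrable lborel (\<lambda>s. (- s) ^ k * K s * exp (- b * s))"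
proof -
  have "integrable lborel (\<lambda>s. (-1) ^ k * (s ^ k * K s * exp ((- b) * s)))"
    by (rule integrable_mult_right, rule integrable_moment)
  moreover have "(\<lambda>s. (-1) ^ k * (s ^ k * K s * exp ((- b) * s))) = (\<lambda>s. (- s) ^ k * K s * exp (- b * s))"
  proof (rule ext)
    fix s :: real
    have "(- s) ^ k = (-1) ^ k * s ^ k" by (rule power_minus)
    thus "(-1) ^ k * (s ^ k * K s * exp ((- b) * s)) = (- s) ^ k * K s * exp (- b * s)"
      by (simp only: mult.assoc minus_mult_left)
  qed
  ultimately show ?thesis by (simp only:)
qed

text \<open>Pointwise second-order Taylor bound for the integrand of \<open>L k\<close>, with an integrable
  majorant; it gives differentiability under the integral sign.\<close>
lemma L_integrand_taylor:
  fixes s t b :: real assumes t: "\<bar>t\<bar> \<le> 1"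
  shows "\<bar>(- s) ^ k * K s * exp (- (b + t) * s) - (- s) ^ k * K s * exp (- b * s)
           - t * ((- s) ^ Suc k * K s * exp (- b * s))\<bar>
         \<le> t\<^sup>2 * (fact (k + 2) * (K s * exp ((2 - b) * s) + 2 * (K s * exp ((- b) * s))
                                  + K s * exp ((- 2 - b) * s)))"
proof -
  have K0: "0 \<le> K s" by (rule K_nonneg)
  have e1: "exp (- (b + t) * s) = exp (- b * s) * exp (- t * s)"
    by (simp flip: exp_add add: algebra_simps)
  have eq: "(- s) ^ k * K s * exp (- (b + t) * s) - (- s) ^ k * K s * exp (- b * s)
           - t * ((- s) ^ Suc k * K s * exp (- b * s))
         = ((- s) ^ k * K s * exp (- b * s)) * (exp (- t * s) - 1 - (- t * s))"
    unfolding e1 by (simp add: algebra_simps)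
  have taylor: "\<bar>exp (- t * s) - 1 - (- t * s)\<bar> \<le> t\<^sup>2 * (s\<^sup>2 * exp \<bar>s\<bar>)"
  proof -
    have "\<bar>- t * s\<bar> \<le> \<bar>s\<bar>" using t by (simp add: abs_mult mult_left_le_one_le)
    hence "exp \<bar>- t * s\<bar> \<le> exp \<bar>s\<bar>" by simp
    hence "t\<^sup>2 * s\<^sup>2 * exp \<bar>- t * s\<bar> \<le> t\<^sup>2 * s\<^sup>2 * exp \<bar>s\<bar>"
      by (rule mult_left_mono) simp
    hence "(- t * s)\<^sup>2 * exp \<bar>- t * s\<bar> \<le> t\<^sup>2 * (s\<^sup>2 * exp \<bar>s\<bar>)"
      by (simp add: power_mult_distrib mult.assoc)
    with exp_taylor2_bound[of "- t * s"] show ?thesis by (rule order.trans)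
  qed
  have "\<bar>(- s) ^ k * K s * exp (- b * s) * (exp (- t * s) - 1 - (- t * s))\<bar>
       = (\<bar>s\<bar> ^ k * (K s * exp (- b * s))) * \<bar>exp (- t * s) - 1 - (- t * s)\<bar>"
    using K0 by (simp add: abs_mult power_abs)
  also have "\<dots> \<le> (\<bar>s\<bar> ^ k * (K s * exp (- b * s))) * (t\<^sup>2 * (s\<^sup>2 * exp \<bar>s\<bar>))"
    by (rule mult_left_mono[OF taylor]) (use K0 in simp)
  also have "\<dots> = t\<^sup>2 * (K s * exp (- b * s)) * (\<bar>s\<bar> ^ k * (s\<^sup>2 * exp \<bar>s\<bar>))"
    by (simp only: mult_ac)
  also have "\<dots> \<le> t\<^sup>2 * (K s * exp (- b * s)) * (fact (k + 2) * (exp (2 * s) + 2 + exp (- 2 * s)))"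
    by (rule mult_left_mono[OF abs_pow_sq_exp_le]) (use K0 in simp)
  also have "\<dots> = t\<^sup>2 * (fact (k + 2) * (K s * exp ((2 - b) * s) + 2 * (K s * exp ((- b) * s))
                                  + K s * exp ((- 2 - b) * s)))"
  proof -
    have "exp (- b * s) * exp (2 * s) = exp ((2 - b) * s)" by (simp add: algebra_simps flip: exp_add)
    moreover have "exp (- b * s) * exp (- 2 * s) = exp ((- 2 - b) * s)" by (simp add: algebra_simps flip: exp_add)
    ultimately show ?thesis by (simp add: algebra_simps)
  qed
  finally show ?thesis unfolding eq .
qed

lemma L_deriv: "(L k has_real_derivative L (Suc k) b) (at b)"
proof -
  define M where "M s = fact (k + 2) * (K s * exp ((2 - b) * s) + 2 * (K s * exp ((- b) * s))
                                  + K s * exp ((- 2 - b) * s))" for s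
  have intM: "integrable lborel M"
    unfolding M_def
    by (rule integrable_mult_right, rule Bochner_Integration.integrable_add[OF
          Bochner_Integration.integrable_add[OF K_exp integrable_mult_right[OF K_exp]] K_exp])
  show ?thesis
  proof (rule has_real_derivative_quadratic_remainder[where C = "LINT s|lborel. M s"])
    fix t :: real assume t: "\<bar>t\<bar> \<le> 1"
    have iA: "integrable lborel (\<lambda>s. (- s) ^ k * K s * exp (- (b + t) * s))"
      and iB: "integrable lborel (\<lambda>s. (- s) ^ k * K s * exp (- b * s))"
      and iC: "integrable lborel (\<lambda>s. (- s) ^ Suc k * K s * exp (- b * s))"
      by (rule integrable_L)+
    have iAB: "integrable lborel (\<lambda>s. (- s) ^ k * K s * exp (- (b + t) * s) - (- s) ^ k * K s * exp (- b * s))"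
      by (rule Bochner_Integration.integrable_diff[OF iA iB])
    have eq: "L k (b + t) - L k b - t * L (Suc k) b
       = (LINT s|lborel. (- s) ^ k * K s * exp (- (b + t) * s) - (- s) ^ k * K s * exp (- b * s)
           - t * ((- s) ^ Suc k * K s * exp (- b * s)))"
      unfolding L_def Bochner_Integration.integral_diff[OF iA iB, symmetric]
      by (rule integral_diff_scaled[OF iAB iC])
    have "\<bar>LINT s|lborel. (- s) ^ k * K s * exp (- (b + t) * s) - (- s) ^ k * K s * exp (- b * s)
           - t * ((- s) ^ Suc k * K s * exp (- b * s))\<bar> \<le> (LINT s|lborel. t\<^sup>2 * M s)"
      unfolding real_norm_def[symmetric]
    proof (rule Bochner_Integration.integral_norm_bound_integral)
      show "integrable lborel (\<lambda>s. (- s) ^ k * K s * exp (- (b + t) * s) - (- s) ^ k * K s * exp (- b * s)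
           - t * ((- s) ^ Suc k * K s * exp (- b * s)))"
        by (rule Bochner_Integration.integrable_diff[OF iAB integrable_mult_right[OF iC]])
      show "integrable lborel (\<lambda>s. t\<^sup>2 * M s)" using intM by (rule integrable_mult_right)
      show "norm ((- s) ^ k * K s * exp (- (b + t) * s) - (- s) ^ k * K s * exp (- b * s)
           - t * ((- s) ^ Suc k * K s * exp (- b * s))) \<le> t\<^sup>2 * M s" for s
        unfolding real_norm_def M_def by (rule L_integrand_taylor[OF t])
    qed
    also have "(LINT s|lborel. t\<^sup>2 * M s) = (LINT s|lborel. M s) * t\<^sup>2"
      by (subst integral_mult_right_zero) (rule mult.commute)
    finally show "\<bar>L k (b + t) - L k b - t * L (Suc k) b\<bar> \<le> (LINT s|lborel. M s) * t\<^sup>2"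
      unfolding eq .
  qed
qed

lemma L_deriv_chain [derivative_intros]:
  "(f has_real_derivative f') (at x within S) \<Longrightarrow>
   ((\<lambda>x. L k (f x)) has_real_derivative L (Suc k) (f x) * f') (at x within S)"
  by (rule DERIV_chain2[OF L_deriv])

lemma L_tendsto [tendsto_intros]: "(f \<longlongrightarrow> a) F \<Longrightarrow> ((\<lambda>x. L k (f x)) \<longlongrightarrow> L k a) F"
  by (rule isCont_tendsto_compose[OF DERIV_isCont[OF L_deriv]])

lemma K_even_part:
  fixes f :: "real \<Rightarrow> real"
  assumes int: "integrable lborel (\<lambda>s. K s * f s)"
  shows "integrable lborel (\<lambda>s. K s * ((f s + f (- s)) / 2))"
    and "(LINT s|lborel. K s * f s) = (LINT s|lborel. K s * ((f s + f (- s)) / 2))"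
proof -
  have i2: "integrable lborel (\<lambda>s. K s * f (- s))"
    using lborel_integrable_reflect[OF int] K_sym by (metis (no_types, lifting) ext)
  have refl: "(LINT s|lborel. K s * f s) = (LINT s|lborel. K s * f (- s))"
    using lborel_integral_reflect[of "\<lambda>s. K s * f s"] K_sym by simp
  have eq: "(\<lambda>s. K s * ((f s + f (- s)) / 2)) = (\<lambda>s. (K s * f s + K s * f (- s)) / 2)"
    by (simp add: algebra_simps)
  show "integrable lborel (\<lambda>s. K s * ((f s + f (- s)) / 2))"
    unfolding eq using int i2 by simp
  show "(LINT s|lborel. K s * f s) = (LINT s|lborel. K s * ((f s + f (- s)) / 2))"
    unfolding eq using int i2 refl by simp
qed

text \<open>Since \<open>\<integral> K = 1\<close>, the kernel charges every set of positive measure away from \<open>0\<close>: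
  integrals of weights positive off the origin are positive.\<close>
lemma K_integral_pos:
  assumes w0: "\<And>s. 0 \<le> w s" and wp: "\<And>s. s \<noteq> 0 \<Longrightarrow> 0 < w s"
    and int: "integrable lborel (\<lambda>s. K s * w s)"
  shows "0 < (LINT s|lborel. K s * w s)"
proof -
  have "0 \<le> (LINT s|lborel. K s * w s)"
    by (rule Bochner_Integration.integral_nonneg) (use K_nonneg w0 in simp)
  moreover have "(LINT s|lborel. K s * w s) \<noteq> 0"
  proof
    assume "(LINT s|lborel. K s * w s) = 0"
    hence "AE s in lborel. K s * w s = 0"
      using integral_nonneg_eq_0_iff_AE[OF int] K_nonneg w0 by simp
    hence "AE s in lborel. K s = 0"
      using AE_lborel_singleton[of 0]
    proof eventually_elim
      case (elim s) thus ?case using wp[of s] by auto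
    qed
    hence "(LINT s|lborel. K s) = (LINT (s::real)|lborel. (0::real))"
      using K_meas by (intro Bochner_Integration.integral_cong_AE) auto
    thus False using K_one by simp
  qed
  ultimately show ?thesis by simp
qed

lemma integrable_K_cosh: "integrable lborel (\<lambda>s. K s * cosh (b * s))"
proof -
  have "integrable lborel (\<lambda>s. (K s * exp (b * s) + K s * exp ((- b) * s)) / 2)"
    by (intro integrable_divide_zero Bochner_Integration.integrable_add K_exp)
  moreover have "(\<lambda>s. (K s * exp (b * s) + K s * exp ((- b) * s)) / 2) = (\<lambda>s. K s * cosh (b * s))"
    by (rule ext) (simp add: cosh_def algebra_simps)
  ultimately show ?thesis by (simp only:)
qed

lemma L0_cosh: "L 0 b = (LINT s|lborel. K s * cosh (b * s))"
proof -
  have "L 0 b = (LINT s|lborel. K s * exp (- (b * s)))" unfolding L_def by simp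
  also have "\<dots> = (LINT s|lborel. K s * ((exp (- (b * s)) + exp (- (b * - s))) / 2))"
    by (rule K_even_part(2)) (use K_exp[of "- b"] in simp)
  also have "\<dots> = (LINT s|lborel. K s * cosh (b * s))"
    by (simp add: cosh_def add.commute)
  finally show ?thesis .
qed

lemma L0_ge1: "1 \<le> L 0 b"
proof -
  have "(LINT s|lborel. K s) \<le> (LINT s|lborel. K s * cosh (b * s))"
  proof (rule integral_mono[OF K_int integrable_K_cosh])
    fix s
    have "K s * 1 \<le> K s * cosh (b * s)" by (rule mult_left_mono[OF cosh_real_ge_1 K_nonneg])
    thus "K s \<le> K s * cosh (b * s)" by simp
  qed
  thus ?thesis using K_one L0_cosh by simp
qed

lemma L0_pos: "0 < L 0 b"
  using L0_ge1[of b] by simp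

lemma L0_gt1: assumes "b \<noteq> 0" shows "1 < L 0 b"
proof -
  have "0 < (LINT s|lborel. K s * (cosh (b * s) - 1))"
  proof (rule K_integral_pos)
    show "0 \<le> cosh (b * s) - 1" for s using cosh_real_ge_1 by simp
    show "0 < cosh (b * s) - 1" if "s \<noteq> 0" for s
    proof -
      have "cosh 0 < cosh \<bar>b * s\<bar>" using that assms by (intro cosh_real_strict_mono) auto
      thus ?thesis by simp
    qed
    show "integrable lborel (\<lambda>s. K s * (cosh (b * s) - 1))"
      using integrable_K_cosh[of b] K_int by (simp add: right_diff_distrib)
  qed
  also have "(LINT s|lborel. K s * (cosh (b * s) - 1)) = L 0 b - 1"
    using integrable_K_cosh[of b] K_int K_one L0_cosh by (simp add: right_diff_distrib)
  finally show ?thesis by simp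
qed

lemma L0_mono: assumes "0 \<le> b" "b \<le> b'" shows "L 0 b \<le> L 0 b'"
proof -
  have "(LINT s|lborel. K s * cosh (b * s)) \<le> (LINT s|lborel. K s * cosh (b' * s))"
  proof (rule integral_mono[OF integrable_K_cosh integrable_K_cosh])
    fix s
    have "cosh (b * s) = cosh \<bar>b * s\<bar>" by (cases "b * s \<ge> 0") auto
    also have "\<dots> \<le> cosh \<bar>b' * s\<bar>"
      using assms by (subst cosh_real_nonneg_le_iff) (auto simp: abs_mult intro!: mult_right_mono)
    also have "\<dots> = cosh (b' * s)" by (cases "b' * s \<ge> 0") auto
    finally show "K s * cosh (b * s) \<le> K s * cosh (b' * s)"
      using K_nonneg by (simp add: mult_left_mono)
  qed
  thus ?thesis unfolding L0_cosh .
qed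

text \<open>\<open>L 1 b = \<integral> K(s) s sinh(bs) ds \<ge> 0\<close> for \<open>b \<ge> 0\<close>.\<close>
lemma L1_nonneg: assumes b: "0 \<le> b" shows "0 \<le> L 1 b"
proof -
  have i: "integrable lborel (\<lambda>s. K s * (- s * exp (- (b * s))))"
    using integrable_L[of 1 b] by (simp add: mult_ac)
  have "L 1 b = (LINT s|lborel. K s * (- s * exp (- (b * s))))"
    unfolding L_def by (simp add: mult_ac)
  also have "\<dots> = (LINT s|lborel. K s * ((- s * exp (- (b * s)) + - (- s) * exp (- (b * - s))) / 2))"
    by (rule K_even_part(2)[OF i])
  also have "\<dots> = (LINT s|lborel. K s * (s * sinh (b * s)))"
    by (rule Bochner_Integration.integral_cong) (simp_all add: sinh_def field_simps)
  also have "\<dots> \<ge> 0"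
  proof (rule Bochner_Integration.integral_nonneg)
    fix s :: real
    have "0 \<le> s * sinh (b * s)"
    proof (cases "s \<ge> 0")
      case True thus ?thesis using b by (simp add: sinh_real_nonneg_iff)
    next
      case False
      hence "sinh (b * s) \<le> 0" using b sinh_real_nonneg_iff[of "- (b * s)"] by (simp add: mult_nonneg_nonpos)
      thus ?thesis using False by (simp add: mult_nonpos_nonpos)
    qed
    thus "0 \<le> K s * (s * sinh (b * s))" using K_nonneg by simp
  qed
  finally show ?thesis .
qed

text \<open>The quadratic form \<open>L\<^sub>2 - 2u L\<^sub>1 + u\<^sup>2 L\<^sub>0 = \<integral> K(s) (s+u)\<^sup>2 exp(-ls) ds\<close> is nonnegative;
  this is the convexity of \<open>\<chi>\<close> in \<open>l\<close>.\<close>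
lemma L_quadratic_form_nonneg: "0 \<le> L 2 l - 2 * u * L 1 l + u\<^sup>2 * L 0 l"
proof -
  have i0: "integrable lborel (\<lambda>s. (- s) ^ 0 * K s * exp (- l * s))"
    and i1: "integrable lborel (\<lambda>s. (- s) ^ 1 * K s * exp (- l * s))"
    and i2: "integrable lborel (\<lambda>s. (- s) ^ 2 * K s * exp (- l * s))" by (rule integrable_L)+
  have "L 2 l - 2 * u * L 1 l + u\<^sup>2 * L 0 l
     = (LINT s|lborel. (- s) ^ 2 * K s * exp (- l * s) - 2 * u * ((- s) ^ 1 * K s * exp (- l * s))
          + u\<^sup>2 * ((- s) ^ 0 * K s * exp (- l * s)))"
    unfolding L_def using i0 i1 i2 by simp
  also have "\<dots> = (LINT s|lborel. (K s * exp (- l * s)) * (s + u)\<^sup>2)"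
    by (rule Bochner_Integration.integral_cong) (simp_all add: algebra_simps power2_eq_square)
  also have "\<dots> \<ge> 0"
    by (rule Bochner_Integration.integral_nonneg) (use K_nonneg in simp)
  finally show ?thesis .
qed

definition sig2 :: real where "sig2 = (LINT s|lborel. s\<^sup>2 * K s)"

lemma sig2_nonneg: "0 \<le> sig2"
  unfolding sig2_def by (rule Bochner_Integration.integral_nonneg) (use K_nonneg in simp)

text \<open>The inequality behind \<open>k\<^sub>1\<close>: \<open>L\<^sub>0(a) - a L\<^sub>1(a) < 1 - a\<^sup>2 \<sigma>\<^sup>2/2\<close> for \<open>a \<noteq> 0\<close>, obtained
  by integrating \<open>cosh x - x sinh x < 1 - x\<^sup>2/2\<close> against \<open>K\<close>.\<close>
lemma L0_minus_L1_lt: assumes a: "a \<noteq> 0" shows "L 0 a - a * L 1 a < 1 - a\<^sup>2 / 2 * sig2"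
proof -
  define f where "f s = exp (- (a * s)) * (1 + a * s)" for s
  define E where "E s = cosh (a * s) - (a * s) * sinh (a * s)" for s
  define P where "P s = 1 - (a * s)\<^sup>2 / 2" for s
  have iL0: "integrable lborel (\<lambda>s. (- s) ^ 0 * K s * exp (- a * s))"
    and iL1: "integrable lborel (\<lambda>s. (- s) ^ 1 * K s * exp (- a * s))" by (rule integrable_L)+
  have Kf: "(\<lambda>s. (- s) ^ 0 * K s * exp (- a * s) - a * ((- s) ^ 1 * K s * exp (- a * s))) = (\<lambda>s. K s * f s)"
    by (rule ext) (simp add: f_def algebra_simps)
  have iKf: "integrable lborel (\<lambda>s. K s * f s)"
    unfolding Kf[symmetric] using iL0 iL1 by simp
  have even: "(\<lambda>s. K s * ((f s + f (- s)) / 2)) = (\<lambda>s. K s * E s)"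
    by (rule ext) (simp add: f_def E_def cosh_def sinh_def field_simps)
  have iE: "integrable lborel (\<lambda>s. K s * E s)" using K_even_part(1)[OF iKf] unfolding even .
  have LE: "L 0 a - a * L 1 a = (LINT s|lborel. K s * E s)"
    unfolding L_def integral_diff_scaled[OF iL0 iL1] Kf K_even_part(2)[OF iKf] even ..
  have PK: "(\<lambda>s. K s - a\<^sup>2 / 2 * (s\<^sup>2 * K s)) = (\<lambda>s. K s * P s)"
    by (rule ext) (simp add: P_def algebra_simps power_mult_distrib)
  have iP: "integrable lborel (\<lambda>s. K s * P s)"
    unfolding PK[symmetric] using K_int integrable_moment[of 2 0] by simp
  have LP: "1 - a\<^sup>2 / 2 * sig2 = (LINT s|lborel. K s * P s)"
    using integral_diff_scaled[OF K_int, of "\<lambda>s. s\<^sup>2 * K s" "a\<^sup>2 / 2"] integrable_moment[of 2 0]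
    unfolding PK K_one sig2_def by simp
  have "0 < (LINT s|lborel. K s * (P s - E s))"
  proof (rule K_integral_pos)
    show "0 < P s - E s" if "s \<noteq> 0" for s
      using cosh_sinh_gap_pos[of "a * s"] that a unfolding P_def E_def by simp
    show "0 \<le> P s - E s" for s
      using cosh_sinh_gap_pos[of "a * s"] unfolding P_def E_def by (cases "a * s = 0") auto
    show "integrable lborel (\<lambda>s. K s * (P s - E s))"
      using iP iE by (simp add: right_diff_distrib)
  qed
  also have "(LINT s|lborel. K s * (P s - E s)) = (LINT s|lborel. K s * P s) - (LINT s|lborel. K s * E s)"
    using iP iE by (simp add: right_diff_distrib)
  finally show ?thesis using LE LP by linarith
qed


section \<open>The characteristic function in scaled variables\<close>

text \<open>\<open>\<chi>(h,c,l)\<close> is \<open>psi\<^sub>h(z,\<epsilon>)\<close> with \<open>c = 1/sqrt \<epsilon>\<close>, \<open>l = sqrt \<epsilon> * z\<close>; \<open>chi_l\<close> and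
  \<open>chi_ll\<close> are its first and second derivatives in \<open>l\<close>.\<close>
definition chi :: "real \<Rightarrow> real \<Rightarrow> real \<Rightarrow> real" where
  "chi h c l = l\<^sup>2 - c * l - 1 + p * exp (- l * c * h) * L 0 l"

definition chi_l :: "real \<Rightarrow> real \<Rightarrow> real \<Rightarrow> real" where
  "chi_l h c l = 2 * l - c + p * exp (- l * c * h) * (L 1 l - c * h * L 0 l)"

definition chi_ll :: "real \<Rightarrow> real \<Rightarrow> real \<Rightarrow> real" where
  "chi_ll h c l = 2 + p * exp (- l * c * h) * (L 2 l - 2 * (c * h) * L 1 l + (c * h)\<^sup>2 * L 0 l)"

lemma chi_deriv_l: "((\<lambda>y. chi h c y) has_real_derivative chi_l h c l) (at l)"
  unfolding chi_def chi_l_def by (auto intro!: derivative_eq_intros simp: algebra_simps)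

lemma chi_l_deriv_l: "((\<lambda>y. chi_l h c y) has_real_derivative chi_ll h c l) (at l)"
  unfolding chi_l_def chi_ll_def
  by (auto intro!: derivative_eq_intros simp: algebra_simps power2_eq_square numeral_2_eq_2)

lemma chi_ll_ge2: "2 \<le> chi_ll h c l"
  using L_quadratic_form_nonneg[of l "c * h"] p_gt unfolding chi_ll_def by simp

lemma psi_chi: assumes "\<epsilon> > 0" shows "psi K p h z \<epsilon> = chi h (1 / sqrt \<epsilon>) (sqrt \<epsilon> * z)"
proof -
  have s: "sqrt \<epsilon> > 0" using assms by simp
  have "(sqrt \<epsilon> * z)\<^sup>2 = \<epsilon> * z\<^sup>2" using assms by (simp add: power_mult_distrib)
  moreover have "1 / sqrt \<epsilon> * (sqrt \<epsilon> * z) = z" using s by simp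
  moreover have "- (sqrt \<epsilon> * z) * (1 / sqrt \<epsilon>) * h = - z * h" using s by simp
  ultimately show ?thesis unfolding psi_def chi_def L_def by (simp add: mult_ac)
qed

lemma psi_deriv: assumes "\<epsilon> > 0"
  shows "((\<lambda>y. psi K p h y \<epsilon>) has_real_derivative sqrt \<epsilon> * chi_l h (1 / sqrt \<epsilon>) (sqrt \<epsilon> * y)) (at y)"
proof -
  have s: "sqrt \<epsilon> > 0" using assms by simp
  have "((\<lambda>y. chi h (1 / sqrt \<epsilon>) (sqrt \<epsilon> * y)) has_real_derivative
      chi_l h (1 / sqrt \<epsilon>) (sqrt \<epsilon> * y) * sqrt \<epsilon>) (at y)"
    by (rule DERIV_chain2[OF chi_deriv_l]) (auto intro!: derivative_eq_intros)
  thus ?thesis using psi_chi[OF assms] by (simp add: mult.commute)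
qed

abbreviation cs :: "real \<Rightarrow> real" where "cs \<equiv> cstar K p"

definition z0 :: "real \<Rightarrow> real" where
  "z0 h = (SOME z. z > 0 \<and> psi K p h z (eps0 K p h) = 0 \<and> deriv (\<lambda>y. psi K p h y (eps0 K p h)) z = 0)"

definition lam :: "real \<Rightarrow> real" where "lam h = sqrt (eps0 K p h) * z0 h"

text \<open>By uniqueness of the double root, \<open>eps0\<close> (a definite description) is well defined.\<close>
lemma eps0_prop: assumes h: "h \<ge> 0"
  shows "eps0 K p h > 0 \<and> (\<exists>z>0. psi K p h z (eps0 K p h) = 0 \<and> deriv (\<lambda>y. psi K p h y (eps0 K p h)) z = 0)"
proof -
  let ?P = "\<lambda>\<epsilon>. \<epsilon> > 0 \<and> (\<exists>z>0. psi K p h z \<epsilon> = 0 \<and> deriv (\<lambda>y. psi K p h y \<epsilon>) z = 0)"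
  let ?Q = "\<lambda>z e. z > 0 \<and> e > 0 \<and> psi K p h z e = 0 \<and> deriv (\<lambda>y. psi K p h y e) z = 0"
  obtain z0 e0 where ze: "?Q z0 e0" and un: "\<And>z e. ?Q z e \<Longrightarrow> (z, e) = (z0, e0)"
    using standing_unique[OF h] by (auto elim!: ex1E)
  have "\<exists>!\<epsilon>. ?P \<epsilon>"
  proof (rule ex1I[of _ e0])
    show "?P e0" using ze by blast
    fix e assume "?P e"
    then obtain z where "?Q z e" by blast
    from un[OF this] show "e = e0" by simp
  qed
  from theI'[OF this] show ?thesis unfolding eps0_def .
qed

lemma eps0_pos: "h \<ge> 0 \<Longrightarrow> eps0 K p h > 0"
  using eps0_prop by blast

lemma z0_prop: assumes h: "h \<ge> 0"
  shows "z0 h > 0 \<and> psi K p h (z0 h) (eps0 K p h) = 0 \<and> deriv (\<lambda>y. psi K p h y (eps0 K p h)) (z0 h) = 0"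
  unfolding z0_def by (rule someI_ex) (use eps0_prop[OF h] in blast)

lemma cs_eq: "cs h = 1 / sqrt (eps0 K p h)"
  unfolding cstar_def ..

lemma cs_pos: "h \<ge> 0 \<Longrightarrow> cs h > 0"
  unfolding cs_eq using eps0_pos by simp

lemma lam_pos: "h \<ge> 0 \<Longrightarrow> lam h > 0"
  unfolding lam_def using eps0_pos z0_prop by simp

lemma chi_lam: assumes h: "h \<ge> 0" shows "chi h (cs h) (lam h) = 0"
  using z0_prop[OF h] psi_chi[OF eps0_pos[OF h]] unfolding cs_eq lam_def by simp

lemma chi_l_lam: assumes h: "h \<ge> 0" shows "chi_l h (cs h) (lam h) = 0"
proof -
  have e: "eps0 K p h > 0" by (rule eps0_pos[OF h])
  have "deriv (\<lambda>y. psi K p h y (eps0 K p h)) (z0 h)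
      = sqrt (eps0 K p h) * chi_l h (1 / sqrt (eps0 K p h)) (sqrt (eps0 K p h) * z0 h)"
    by (rule DERIV_imp_deriv[OF psi_deriv[OF e]])
  thus ?thesis using z0_prop[OF h] e unfolding cs_eq lam_def by simp
qed


section \<open>Comparison principles\<close>

lemma chi_antimono_c: assumes "h \<ge> 0" "l > 0" "c \<le> c'" shows "chi h c' l \<le> chi h c l"
proof -
  have "exp (- l * c' * h) \<le> exp (- l * c * h)"
    using assms by (simp add: mult_right_mono mult_left_mono)
  hence "p * exp (- l * c' * h) * L 0 l \<le> p * exp (- l * c * h) * L 0 l"
    using p_gt L0_pos[of l] by (intro mult_right_mono mult_left_mono) auto
  moreover have "c * l \<le> c' * l" using assms by (simp add: mult_right_mono)
  ultimately show ?thesis unfolding chi_def by linarith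
qed

text \<open>By continuity \<open>\<chi>(h,c,l) < 0\<close> for some \<open>c < Y\<close>, so \<open>\<epsilon> = 1/c\<^sup>2\<close> admits a
  point where \<open>psi\<close> is negative, whence \<open>\<epsilon> \<le> \<epsilon>\<^sub>0(h)\<close> by the standing facts.\<close>
lemma cs_less_of_chi_neg:
  assumes h: "h \<ge> 0" and Y: "Y > 0" and l: "l > 0" and neg: "chi h Y l < 0"
  shows "cs h < Y"
proof -
  have "((\<lambda>c. chi h c l) \<longlongrightarrow> chi h Y l) (at_left Y)"
    unfolding chi_def by (intro tendsto_intros)
  hence ev1: "\<forall>\<^sub>F c in at_left Y. chi h c l < 0" using neg by (rule order_tendstoD(2))
  have ev2: "\<forall>\<^sub>F c in at_left Y. c \<in> {0<..<Y}" by (rule eventually_at_left_real[OF Y])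
  obtain c where c: "chi h c l < 0" "c \<in> {0<..<Y}"
    using eventually_happens[OF eventually_conj[OF ev1 ev2]] trivial_limit_at_left_real by blast
  hence c0: "c > 0" "c < Y" by auto
  define \<epsilon> where "\<epsilon> = 1 / c\<^sup>2"
  have e0: "\<epsilon> > 0" using c0 by (simp add: \<epsilon>_def)
  have se: "sqrt \<epsilon> = 1 / c" using c0 by (simp add: \<epsilon>_def real_sqrt_divide)
  have "psi K p h (c * l) \<epsilon> = chi h c l"
    using psi_chi[OF e0, of h "c * l"] se c0 by simp
  hence "\<not> eps0 K p h < \<epsilon>" using standing_pos[OF h, of \<epsilon> "c * l"] c c0 l by force
  hence "sqrt \<epsilon> \<le> sqrt (eps0 K p h)" by simp
  hence "1 / sqrt (eps0 K p h) \<le> 1 / sqrt \<epsilon>" using e0 by (intro divide_left_mono) auto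
  hence "cs h \<le> c" unfolding cs_eq se using c0 by simp
  thus ?thesis using c0 by simp
qed

text \<open>Lower bound principle: if \<open>\<chi>(h,X,\<cdot>) > 0\<close> on \<open>(0,\<infinity>)\<close> then \<open>X < c\<^sub>*(h)\<close>, since
  \<open>\<chi>\<close> decreases in \<open>c\<close> and vanishes at \<open>(c\<^sub>*(h), \<lambda>(h))\<close>.\<close>
lemma less_cs_of_chi_pos: assumes h: "h \<ge> 0" and pos: "\<And>l. l > 0 \<Longrightarrow> 0 < chi h X l"
  shows "X < cs h"
proof (rule ccontr)
  assume "\<not> X < cs h"
  hence "chi h X (lam h) \<le> chi h (cs h) (lam h)" using h lam_pos[OF h] by (intro chi_antimono_c) auto
  thus False using pos[OF lam_pos[OF h]] chi_lam[OF h] by simp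
qed

lemma chi_cs_nonneg: assumes h: "h \<ge> 0" and l: "l > 0" shows "0 \<le> chi h (cs h) l"
  using cs_less_of_chi_neg[OF h cs_pos[OF h] l] by fastforce

text \<open>Strict monotonicity: \<open>\<chi>\<close> strictly decreases in \<open>h\<close>, so \<open>\<chi>(b, c\<^sub>*(a), \<lambda>(a)) < 0\<close>.\<close>
lemma cs_strict_mono: assumes a: "0 \<le> a" and ab: "a < b" shows "cs b < cs a"
proof (rule cs_less_of_chi_neg)
  show "0 \<le> b" using a ab by simp
  show "0 < cs a" by (rule cs_pos[OF a])
  show "0 < lam a" by (rule lam_pos[OF a])
  have "exp (- lam a * cs a * b) < exp (- lam a * cs a * a)"
    using ab lam_pos[OF a] cs_pos[OF a] by simp
  hence "p * exp (- lam a * cs a * b) * L 0 (lam a) < p * exp (- lam a * cs a * a) * L 0 (lam a)"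
    using p_gt L0_pos[of "lam a"] by simp
  hence "chi b (cs a) (lam a) < chi a (cs a) (lam a)" unfolding chi_def by simp
  thus "chi b (cs a) (lam a) < 0" using chi_lam[OF a] by simp
qed

lemma cs_antimono: assumes "0 \<le> a" "a \<le> b" shows "cs b \<le> cs a"
  using cs_strict_mono[OF assms(1)] assms(2) by (cases "a = b") (auto simp: less_imp_le)


section \<open>Explicit bounds\<close>

text \<open>Dropping the kernel (\<open>L\<^sub>0 > 1\<close>) gives a simpler lower estimate for \<open>\<chi>\<close>.\<close>
lemma chi_gt_kernel_free: assumes l: "l > 0" shows "l\<^sup>2 - X * l - 1 + p * exp (- l * X * h) < chi h X l"
  using mult_strict_left_mono[OF L0_gt1[of l], of "p * exp (- l * X * h)"] l p_gt
  unfolding chi_def by simp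

lemma cs_gt_sqrt_ratio: assumes h: "h \<ge> 0" shows "2 * sqrt ((p - 1) / (p * (2 * h + h\<^sup>2) + 1)) < cs h"
proof (rule less_cs_of_chi_pos[OF h])
  define X where "X = 2 * sqrt ((p - 1) / (p * (2 * h + h\<^sup>2) + 1))"
  have "0 \<le> p * (2 * h + h\<^sup>2)" using p_gt h by simp
  hence D: "p * (2 * h + h\<^sup>2) + 1 > 0" by simp
  have X0: "X > 0" unfolding X_def using p_gt D by simp
  have "X\<^sup>2 = 4 * ((p - 1) / (p * (2 * h + h\<^sup>2) + 1))"
    unfolding X_def using p_gt D by (simp add: power_mult_distrib real_sqrt_pow2)
  hence X2: "X\<^sup>2 * (p * (2 * h + h\<^sup>2) + 1) = 4 * (p - 1)" using D by simp
  fix l :: real assume l: "l > 0"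
  show "0 < chi h X l"
    using lower_bound_exp_nonneg[OF p_gt h X0 l X2] chi_gt_kernel_free[OF l, of X h] by simp
qed

text \<open>The logarithmic lower bound, from \<open>p exp(-x) \<ge> 1 + ln p - x\<close>.\<close>
lemma cs_gt_of_log: assumes h: "h \<ge> 0" and X: "X > 0" and XB: "X * (1 + h) \<le> 2 * sqrt (ln p)"
  shows "X < cs h"
proof (rule less_cs_of_chi_pos[OF h])
  fix l :: real assume l: "l > 0"
  define r where "r = sqrt (ln p)"
  have r2: "r\<^sup>2 = ln p" unfolding r_def using p_gt by simp
  have "p * exp (- l * X * h) = exp (ln p + - (l * X * h))"
    using p_gt by (simp add: exp_diff exp_minus divide_inverse)
  also have "\<dots> \<ge> 1 + (ln p + - (l * X * h))" by (rule exp_ge_add_one_self)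
  finally have e: "1 + ln p - l * X * h \<le> p * exp (- l * X * h)" by simp
  have "X * (1 + h) * l \<le> 2 * r * l" using XB l unfolding r_def by (intro mult_right_mono) auto
  hence "0 \<le> l\<^sup>2 - X * (1 + h) * l + ln p"
    using r2 by (smt (verit) zero_le_power2 power2_diff)
  hence "0 \<le> l\<^sup>2 - X * l - 1 + p * exp (- l * X * h)" using e by (simp add: algebra_simps)
  thus "0 < chi h X l" using chi_gt_kernel_free[OF l, of X h] by linarith
qed

lemma cs_gt_log_small: assumes h: "0 \<le> h" shows "2 * sqrt (ln p) / (1 + h) < cs h"
  using h p_gt by (intro cs_gt_of_log) auto

lemma cs_gt_log_large: assumes h: "1 \<le> h" shows "sqrt (ln p) / h < cs h"
proof (rule cs_gt_of_log)
  have sp: "sqrt (ln p) > 0" using p_gt by simp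
  show "0 \<le> h" "0 < sqrt (ln p) / h" using h sp by auto
  have "(1 + h) / h \<le> 2" using h by (simp add: divide_le_eq)
  hence "sqrt (ln p) * ((1 + h) / h) \<le> sqrt (ln p) * 2" using sp by (intro mult_left_mono) auto
  thus "sqrt (ln p) / h * (1 + h) \<le> 2 * sqrt (ln p)" by (simp add: mult.commute)
qed

text \<open>\<open>a\<^sub>0\<close> is the point at which \<open>k\<^sub>1\<close> evaluates the transform.\<close>
definition a0 :: real where "a0 = sqrt ((p - 1) / (1 + p / 2 * sig2))"

lemma a0_pos: "a0 > 0"
  unfolding a0_def using p_gt sig2_nonneg by (simp add: add_pos_nonneg)

lemma a0_sq: "a0\<^sup>2 * (1 + p / 2 * sig2) = p - 1"
proof -
  have d: "1 + p / 2 * sig2 > 0" using p_gt sig2_nonneg by (simp add: add_pos_nonneg)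
  have "a0\<^sup>2 = (p - 1) / (1 + p / 2 * sig2)"
    unfolding a0_def using p_gt d by (simp add: real_sqrt_pow2)
  thus ?thesis using d by simp
qed

lemma k1_eq: "k1 K p = 2 * a0 + p * L 1 a0"
proof -
  have "(LINT s|lborel. s * K s * exp (- s * a0)) = - L 1 a0"
    unfolding L_def by (simp add: mult_ac)
  thus ?thesis unfolding k1_def a0_def[symmetric] sig2_def[symmetric] Let_def by simp
qed

lemma k1_ge: "2 * a0 \<le> k1 K p"
  unfolding k1_eq using L1_nonneg[of a0] a0_pos p_gt by simp

lemma k1_pos: "k1 K p > 0"
  using k1_ge a0_pos by simp

text \<open>The defining property of \<open>k\<^sub>1\<close>: \<open>\<chi>(0, k\<^sub>1, a\<^sub>0)\<close> is negative, with room to spare.\<close>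
lemma k1_key: "p * L 0 a0 < 1 + k1 K p * a0 - a0\<^sup>2"
proof -
  have "p * (L 0 a0 - a0 * L 1 a0) < p * (1 - a0\<^sup>2 / 2 * sig2)"
    using L0_minus_L1_lt[of a0] a0_pos p_gt by simp
  moreover have "p * (1 - a0\<^sup>2 / 2 * sig2) = 1 + a0\<^sup>2"
    using a0_sq by (simp add: algebra_simps)
  moreover have "1 + k1 K p * a0 - a0\<^sup>2 = 1 + a0\<^sup>2 + p * a0 * L 1 a0"
    unfolding k1_eq by (simp add: algebra_simps power2_eq_square)
  ultimately show ?thesis by (simp add: algebra_simps)
qed

text \<open>For \<open>h \<le> 1\<close> the factor \<open>exp(-mh)\<close> with \<open>m = a\<^sub>0 k\<^sub>1/(1+h)\<close> more than compensates the
  loss from replacing \<open>k\<^sub>1\<close> by \<open>k\<^sub>1/(1+h)\<close>, via \<open>1 + mh \<le> exp(mh)\<close>.\<close>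
lemma cs_lt_k1: assumes h: "0 \<le> h" "h \<le> 1" shows "cs h < k1 K p / (1 + h)"
proof (rule cs_less_of_chi_neg[OF h(1) _ a0_pos])
  define Y where "Y = k1 K p / (1 + h)"
  define m where "m = a0 * Y"
  define R where "R = 1 + m * (1 + h) - a0\<^sup>2"
  have Y0: "Y > 0" unfolding Y_def using k1_pos h by simp
  thus "0 < k1 K p / (1 + h)" unfolding Y_def .
  have m0: "m \<ge> 0" unfolding m_def using Y0 a0_pos by simp
  have mY: "m * (1 + h) = k1 K p * a0" unfolding m_def Y_def using h by simp
  have ma: "a0\<^sup>2 \<le> m"
  proof -
    have "a0 * (2 * a0) \<le> a0 * k1 K p" using k1_ge a0_pos by simp
    hence "2 * a0\<^sup>2 \<le> m * (1 + h)" using mY by (simp add: power2_eq_square mult_ac)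
    also have "\<dots> \<le> m * 2" using h m0 by (intro mult_left_mono) auto
    finally show ?thesis by simp
  qed
  have RL: "p * L 0 a0 < R" unfolding R_def mY using k1_key by simp
  define E where "E = exp (- (m * h))"
  have E0: "E > 0" unfolding E_def by simp
  have "R \<le> (1 + m - a0\<^sup>2) * (1 + m * h)"
  proof -
    have "m * h \<le> (1 + m - a0\<^sup>2) * (m * h)"
      using mult_right_mono[of 1 "1 + m - a0\<^sup>2" "m * h"] ma m0 h by simp
    thus ?thesis unfolding R_def by (simp add: algebra_simps)
  qed
  also have "\<dots> \<le> (1 + m - a0\<^sup>2) * exp (m * h)"
    using ma by (intro mult_left_mono) (auto simp: exp_ge_add_one_self add.commute)
  finally have "R * E \<le> (1 + m - a0\<^sup>2) * (exp (m * h) * E)" using E0 by (simp add: mult.assoc)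
  also have "exp (m * h) * E = 1" unfolding E_def by (simp flip: exp_add)
  finally have "R * E \<le> 1 + m - a0\<^sup>2" by simp
  moreover have "p * L 0 a0 * E < R * E" using RL E0 by simp
  moreover have "chi h Y a0 = a0\<^sup>2 - m - 1 + p * L 0 a0 * E"
    unfolding chi_def E_def m_def by (simp add: mult_ac)
  ultimately have "chi h Y a0 < 0" by simp
  thus "chi h (k1 K p / (1 + h)) a0 < 0" unfolding Y_def .
qed

lemma cs_lt_k1_large: assumes h: "1 \<le> h" shows "cs h < k1 K p / 2"
  using cs_antimono[of 1 h] cs_lt_k1[of 1] h by simp

text \<open>\<open>r\<^sub>0 = sqrt (ln p)\<close>; \<open>k\<^sub>2\<close> is chosen so that \<open>p exp(-r\<^sub>0 k\<^sub>2) L\<^sub>0(r\<^sub>0) = 1\<close>.\<close>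
definition r0 :: real where "r0 = sqrt (ln p)"

lemma r0_pos: "r0 > 0" unfolding r0_def using p_gt by simp
lemma r0_sq: "r0\<^sup>2 = ln p" unfolding r0_def using p_gt by simp

lemma pL_gt1: "1 < p * L 0 r0"
  using mult_left_mono[OF L0_ge1[of r0], of p] p_gt by linarith

lemma k2_r0: "r0 * k2 K p = ln (p * L 0 r0)"
  unfolding k2_def r0_def[symmetric] L_def using r0_pos by (simp add: mult_ac)

lemma k2_pos: "k2 K p > 0"
proof -
  have "0 < r0 * k2 K p" unfolding k2_r0 using pL_gt1 by simp
  thus ?thesis using r0_pos by (simp add: zero_less_mult_iff)
qed

lemma exp_k2: "exp (- (r0 * k2 K p)) * (p * L 0 r0) = 1"
  unfolding k2_r0 using pL_gt1 p_gt L0_pos[of r0] by (simp add: exp_minus field_simps)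

lemma cs_lt_k2_small: assumes h: "0 < h" "h \<le> 1" shows "cs h < k2 K p / h"
proof (rule cs_less_of_chi_neg[OF less_imp_le[OF h(1)] _ r0_pos])
  show "0 < k2 K p / h" using k2_pos h by simp
  have ex: "p * exp (- r0 * (k2 K p / h) * h) * L 0 r0 = 1"
    using exp_k2 h by (simp add: mult_ac)
  have "chi h (k2 K p / h) r0 = ln p - ln (p * L 0 r0) / h"
    unfolding chi_def ex r0_sq using k2_r0 by (simp add: mult_ac)
  also have "ln (p * L 0 r0) = ln p + ln (L 0 r0)" using p_gt L0_pos[of r0] by (simp add: ln_mult)
  finally have g: "chi h (k2 K p / h) r0 = ln p - (ln p + ln (L 0 r0)) / h" .
  have lL: "ln (L 0 r0) > 0" using L0_gt1[of r0] r0_pos by simp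
  have lp: "ln p > 0" using p_gt by simp
  have "ln p + ln (L 0 r0) \<le> (ln p + ln (L 0 r0)) / h"
    using h lL lp by (simp add: le_divide_eq mult_le_cancel_left1)
  thus "chi h (k2 K p / h) r0 < 0" unfolding g using lL by simp
qed

lemma cs_lt_k2_large: assumes h: "1 \<le> h" shows "cs h < k2 K p / sqrt h"
proof -
  have sh: "sqrt h \<ge> 1" and shh: "sqrt h * sqrt h = h" using h by auto
  define l where "l = r0 / sqrt h"
  have l0: "l > 0" unfolding l_def using r0_pos sh by simp
  have lr: "l \<le> r0" unfolding l_def using r0_pos sh by (simp add: divide_le_eq mult_le_cancel_left1)
  show ?thesis
  proof (rule cs_less_of_chi_neg[OF _ _ l0])
    show "0 \<le> h" "0 < k2 K p / sqrt h" using h k2_pos sh by auto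
    have e1: "- l * (k2 K p / sqrt h) * h = - (r0 * k2 K p)"
      unfolding l_def using shh sh by (simp add: field_simps)
    have "p * exp (- (r0 * k2 K p)) * L 0 l \<le> p * exp (- (r0 * k2 K p)) * L 0 r0"
      using L0_mono[of l r0] l0 lr p_gt by simp
    also have "\<dots> = 1" using exp_k2 by (simp add: mult_ac)
    finally have P1: "p * exp (- l * (k2 K p / sqrt h) * h) * L 0 l \<le> 1" unfolding e1 .
    have l2: "l\<^sup>2 = ln p / h" unfolding l_def using r0_sq h by (simp add: power_divide)
    have lk: "k2 K p / sqrt h * l = ln (p * L 0 r0) / h"
      unfolding l_def using k2_r0 shh sh by (simp add: field_simps)
    have "chi h (k2 K p / sqrt h) l \<le> ln p / h - ln (p * L 0 r0) / h"
      unfolding chi_def l2 lk using P1 by simp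
    also have "\<dots> < 0"
      using p_gt L0_gt1[of r0] r0_pos h by (simp add: divide_strict_right_mono)
    finally show "chi h (k2 K p / sqrt h) l < 0" .
  qed
qed

text \<open>An upper bound of order \<open>1/h\<close>: evaluate \<open>\<chi>\<close> at \<open>l = 1/2\<close> with \<open>c = C\<^sub>2/h\<close>.\<close>
lemma cs_le_C_over_h: "\<exists>C2. C2 > r0 \<and> (\<forall>h\<ge>1. cs h < C2 / h)"
proof -
  define W where "W = p * L 0 (1 / 2)"
  have W0: "W > 0" unfolding W_def using p_gt L0_pos by simp
  define C2 where "C2 = max (r0 + 1) (2 * ln (2 * W))"
  have C2r: "C2 > r0" unfolding C2_def by simp
  have C20: "C2 > 0" using C2r r0_pos by simp
  have "exp (- (C2 / 2)) \<le> exp (- ln (2 * W))" unfolding C2_def by simp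
  also have "\<dots> = 1 / (2 * W)" using W0 by (simp add: exp_minus inverse_eq_divide)
  finally have We: "W * exp (- (C2 / 2)) \<le> 1 / 2"
    using W0 by (simp add: field_simps)
  have "cs h < C2 / h" if h: "1 \<le> h" for h
  proof (rule cs_less_of_chi_neg)
    show "0 \<le> h" "0 < C2 / h" "(0::real) < 1 / 2" using h C20 by auto
    have e: "- (1 / 2) * (C2 / h) * h = - (C2 / 2)" using h by simp
    have "chi h (C2 / h) (1 / 2) = 1 / 4 - C2 / h / 2 - 1 + W * exp (- (C2 / 2))"
      unfolding chi_def e W_def by (simp add: power2_eq_square mult_ac)
    also have "\<dots> < 0"
    proof -
      have "0 \<le> C2 / h / 2" using C20 h by simp
      thus ?thesis using We by linarith
    qed
    finally show "chi h (C2 / h) (1 / 2) < 0" .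
  qed
  thus ?thesis using C2r by blast
qed


section \<open>Regularity of the minimal speed\<close>

lemma chi_ge_sq_dist: assumes h: "h \<ge> 0" shows "(y - lam h)\<^sup>2 \<le> chi h (cs h) y"
proof -
  let ?c = "cs h" and ?l = "lam h"
  have "0 \<le> chi h ?c y - (y - ?l)\<^sup>2"
  proof (rule nonneg_of_convex_touching[where f = "\<lambda>y. chi h ?c y - (y - ?l)\<^sup>2"
        and f' = "\<lambda>y. chi_l h ?c y - 2 * (y - ?l)" and f'' = "\<lambda>y. chi_ll h ?c y - 2"])
    show "((\<lambda>y. chi h ?c y - (y - ?l)\<^sup>2) has_real_derivative chi_l h ?c y - 2 * (y - ?l)) (at y)" for y
      using chi_deriv_l[of h ?c y] by (auto intro!: derivative_eq_intros)
    show "((\<lambda>y. chi_l h ?c y - 2 * (y - ?l)) has_real_derivative chi_ll h ?c y - 2) (at y)" for y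
      using chi_l_deriv_l[of h ?c y] by (auto intro!: derivative_eq_intros)
    show "0 \<le> chi_ll h ?c y - 2" for y using chi_ll_ge2 by simp
    show "chi h ?c ?l - (?l - ?l)\<^sup>2 = 0" using chi_lam[OF h] by simp
    show "chi_l h ?c ?l - 2 * (?l - ?l) = 0" using chi_l_lam[OF h] by simp
  qed
  thus ?thesis by simp
qed

lemma lam_lt_cs: assumes h: "h \<ge> 0" shows "lam h < cs h + 1"
proof (rule ccontr)
  let ?c = "cs h" and ?l = "lam h"
  assume "\<not> ?l < ?c + 1"
  hence "(?c + 1) * ?l \<le> ?l * ?l" using lam_pos[OF h] by (intro mult_right_mono) auto
  hence "?c * ?l + 1 \<le> ?l\<^sup>2" using cs_pos[OF h] \<open>\<not> ?l < ?c + 1\<close> by (simp add: algebra_simps power2_eq_square)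
  moreover have "0 < p * exp (- ?l * ?c * h) * L 0 ?l" using p_gt L0_pos by simp
  ultimately have "0 < chi h ?c ?l" unfolding chi_def by simp
  thus False using chi_lam[OF h] by simp
qed

definition lam_max :: real where "lam_max = cs 0 + 1"

lemma lam_le_lam_max: "h \<ge> 0 \<Longrightarrow> lam h \<le> lam_max"
  unfolding lam_max_def using lam_lt_cs cs_antimono[of 0 h] by fastforce

definition lip_cs :: real where "lip_cs = p * L 0 lam_max * cs 0"

text \<open>Compare \<open>\<chi>(a, c\<^sub>*(a), \<cdot>) \<ge> 0\<close> with \<open>\<chi>(b, c\<^sub>*(b), \<lambda>(b)) = 0\<close> at \<open>\<lambda>(b)\<close>.\<close>
lemma cs_lipschitz: assumes a: "0 \<le> a" and ab: "a \<le> b" shows "cs a - cs b \<le> lip_cs * (b - a)"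
proof -
  have b: "0 \<le> b" using a ab by simp
  let ?l = "lam b" and ?c = "cs b" and ?c' = "cs a"
  have l0: "?l > 0" using lam_pos[OF b] .
  have c0: "?c > 0" using cs_pos[OF b] .
  have cc': "?c \<le> ?c'" using cs_antimono[OF a ab] .
  have e1: "exp (- ?l * ?c' * a) \<le> exp (- ?l * ?c * a)"
    using cc' l0 a by (simp add: mult_right_mono mult_left_mono)
  have "exp (- (?l * ?c * a)) - exp (- (?l * ?c * b)) \<le> ?l * ?c * b - ?l * ?c * a"
    using l0 c0 a ab by (intro exp_neg_diff_le) (auto intro!: mult_left_mono)
  hence "exp (- ?l * ?c * a) - exp (- ?l * ?c * b) \<le> ?l * ?c * (b - a)"
    by (simp add: algebra_simps)
  hence e2: "exp (- ?l * ?c' * a) - exp (- ?l * ?c * b) \<le> ?l * ?c * (b - a)"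
    using e1 by linarith
  have "0 \<le> chi a ?c' ?l - chi b ?c ?l" using chi_cs_nonneg[OF a l0] chi_lam[OF b] by simp
  also have "chi a ?c' ?l - chi b ?c ?l
      = - (?c' - ?c) * ?l + p * L 0 ?l * (exp (- ?l * ?c' * a) - exp (- ?l * ?c * b))"
    unfolding chi_def by (simp add: algebra_simps)
  also have "\<dots> \<le> - (?c' - ?c) * ?l + p * L 0 ?l * (?l * ?c * (b - a))"
    using e2 p_gt L0_pos[of ?l] by (intro add_left_mono mult_left_mono) auto
  finally have "(?c' - ?c) * ?l \<le> (p * L 0 ?l * ?c * (b - a)) * ?l" by (simp add: algebra_simps)
  hence "?c' - ?c \<le> p * L 0 ?l * ?c * (b - a)" using l0 by simp
  also have "\<dots> \<le> lip_cs * (b - a)"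
  proof -
    have "L 0 ?l \<le> L 0 lam_max" using L0_mono[of ?l lam_max] l0 lam_le_lam_max[OF b] by simp
    moreover have "?c \<le> cs 0" by (rule cs_antimono[OF _ b]) simp
    ultimately have "p * L 0 ?l * ?c \<le> p * L 0 lam_max * cs 0"
      using p_gt L0_pos[of ?l] c0 by (intro mult_mono) auto
    thus ?thesis unfolding lip_cs_def using ab by (intro mult_right_mono) auto
  qed
  finally show ?thesis .
qed

lemma cs_tendsto: assumes h: "h \<ge> 0" shows "(cs \<longlongrightarrow> cs h) (at h within {0..})"
proof -
  have lip: "\<bar>cs y - cs h\<bar> \<le> lip_cs * \<bar>y - h\<bar>" if "y \<ge> 0" for y
    using cs_lipschitz[OF h, of y] cs_lipschitz[OF that, of h] cs_antimono[OF h, of y]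
      cs_antimono[OF that, of h] that by (cases "h \<le> y") auto
  have "((\<lambda>y. cs y - cs h) \<longlongrightarrow> 0) (at h within {0..})"
  proof (rule Lim_null_comparison)
    show "\<forall>\<^sub>F y in at h within {0..}. norm (cs y - cs h) \<le> lip_cs * \<bar>y - h\<bar>"
      using lip by (auto simp: eventually_at_filter)
    show "((\<lambda>y. lip_cs * \<bar>y - h\<bar>) \<longlongrightarrow> 0) (at h within {0..})"
      by (rule tendsto_eq_intros refl | simp)+
  qed
  thus ?thesis by (simp add: LIM_zero_iff)
qed

lemma lam_diff_sq_bound: assumes h: "h \<ge> 0" and h': "h' \<ge> 0"
  shows "(lam h' - lam h)\<^sup>2 \<le> \<bar>cs h - cs h'\<bar> * lam_max + p * L 0 lam_max * lam_max * \<bar>cs h * h - cs h' * h'\<bar>"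
proof -
  let ?l = "lam h" and ?c = "cs h" and ?l' = "lam h'" and ?c' = "cs h'"
  have l'0: "?l' > 0" by (rule lam_pos[OF h'])
  have l'L: "?l' \<le> lam_max" by (rule lam_le_lam_max[OF h'])
  have A: "(?c' - ?c) * ?l' \<le> \<bar>?c - ?c'\<bar> * lam_max"
    using l'0 l'L by (smt (verit) abs_ge_self abs_minus_commute mult_mono abs_ge_zero)
  have "\<bar>exp (- (?l' * ?c * h)) - exp (- (?l' * ?c' * h'))\<bar> \<le> \<bar>?l' * ?c * h - ?l' * ?c' * h'\<bar>"
    using l'0 cs_pos[OF h] cs_pos[OF h'] h h' by (intro exp_neg_abs_diff_le) auto
  also have "\<dots> = ?l' * \<bar>?c * h - ?c' * h'\<bar>"
  proof -
    have "?l' * ?c * h - ?l' * ?c' * h' = ?l' * (?c * h - ?c' * h')" by (simp add: algebra_simps)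
    thus ?thesis using l'0 by (simp add: abs_mult)
  qed
  also have "\<dots> \<le> lam_max * \<bar>?c * h - ?c' * h'\<bar>" using l'L by (intro mult_right_mono) auto
  finally have ex: "\<bar>exp (- (?l' * ?c * h)) - exp (- (?l' * ?c' * h'))\<bar> \<le> lam_max * \<bar>?c * h - ?c' * h'\<bar>" .
  have "p * L 0 ?l' * (exp (- (?l' * ?c * h)) - exp (- (?l' * ?c' * h')))
      \<le> p * L 0 ?l' * \<bar>exp (- (?l' * ?c * h)) - exp (- (?l' * ?c' * h'))\<bar>"
    using p_gt L0_pos[of ?l'] by (intro mult_left_mono) auto
  also have "\<dots> \<le> p * L 0 lam_max * (lam_max * \<bar>?c * h - ?c' * h'\<bar>)"
    using ex L0_mono[of ?l' lam_max] l'0 l'L p_gt L0_pos[of ?l'] by (intro mult_mono) auto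
  finally have B: "p * L 0 ?l' * (exp (- (?l' * ?c * h)) - exp (- (?l' * ?c' * h')))
      \<le> p * L 0 lam_max * lam_max * \<bar>?c * h - ?c' * h'\<bar>" by (simp add: mult_ac)
  have "(?l' - ?l)\<^sup>2 \<le> chi h ?c ?l' - chi h' ?c' ?l'" using chi_ge_sq_dist[OF h, of ?l'] chi_lam[OF h'] by simp
  also have "\<dots> = (?c' - ?c) * ?l' + p * L 0 ?l' * (exp (- (?l' * ?c * h)) - exp (- (?l' * ?c' * h')))"
    unfolding chi_def by (simp add: algebra_simps)
  finally show ?thesis using A B by linarith
qed

lemma lam_tendsto: assumes h: "h \<ge> 0" shows "(lam \<longlongrightarrow> lam h) (at h within {0..})"
proof -
  define B where "B y = \<bar>cs h - cs y\<bar> * lam_max + p * L 0 lam_max * lam_max * \<bar>cs h * h - cs y * y\<bar>" for y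
  have "(B \<longlongrightarrow> \<bar>cs h - cs h\<bar> * lam_max + p * L 0 lam_max * lam_max * \<bar>cs h * h - cs h * h\<bar>) (at h within {0..})"
    unfolding B_def by (intro tendsto_intros cs_tendsto[OF h] tendsto_ident_at)
  hence B0: "(B \<longlongrightarrow> 0) (at h within {0..})" by simp
  have "((\<lambda>y. lam y - lam h) \<longlongrightarrow> 0) (at h within {0..})"
  proof (rule Lim_null_comparison)
    show "\<forall>\<^sub>F y in at h within {0..}. norm (lam y - lam h) \<le> sqrt (B y)"
      unfolding eventually_at_filter
    proof (intro always_eventually allI impI)
      fix y :: real assume "y \<in> {0..}"
      hence "(lam y - lam h)\<^sup>2 \<le> B y" unfolding B_def using lam_diff_sq_bound[OF h] by simp
      hence "sqrt ((lam y - lam h)\<^sup>2) \<le> sqrt (B y)" by (rule real_sqrt_le_mono)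
      thus "norm (lam y - lam h) \<le> sqrt (B y)" by simp
    qed
    show "((\<lambda>y. sqrt (B y)) \<longlongrightarrow> 0) (at h within {0..})"
      using tendsto_real_sqrt[OF B0] by simp
  qed
  thus ?thesis by (simp add: LIM_zero_iff)
qed


text \<open>The derivative of \<open>c\<^sub>*\<close>, i.e.\ the implicit derivative \<open>-\<chi>\<^sub>h/\<chi>\<^sub>c\<close> at the double root.\<close>
definition cs_slope :: "real \<Rightarrow> real" where
  "cs_slope h = - (p * L 0 (lam h) * exp (- (lam h * cs h * h)) * cs h)
                / (1 + p * L 0 (lam h) * exp (- (lam h * cs h * h)) * h)"

text \<open>One-sided comparisons at \<open>\<lambda>(h)\<close> and at \<open>\<lambda>(y)\<close> trap the difference quotient of
  \<open>c\<^sub>*\<close> between two values, given the secant slopes \<open>T\<^sub>1\<close>, \<open>T\<^sub>2\<close> of \<open>exp(-x)\<close>.\<close>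
lemma cs_quotient_between:
  assumes h: "h \<ge> 0" and y: "y \<ge> 0" "y \<noteq> h" and T1: "T1 > 0" and T2: "T2 > 0"
    and eq1: "exp (- (lam h * cs y * y)) - exp (- (lam h * cs h * h))
              = - T1 * (lam h * cs y * y - lam h * cs h * h)"
    and eq2: "exp (- (lam y * cs y * y)) - exp (- (lam y * cs h * h))
              = - T2 * (lam y * cs y * y - lam y * cs h * h)"
  defines "A1 \<equiv> p * L 0 (lam h) * T1" and "A2 \<equiv> p * L 0 (lam y) * T2"
  shows "min (- (A1 * cs y) / (1 + A1 * h)) (- (A2 * cs y) / (1 + A2 * h)) \<le> (cs y - cs h) / (y - h)
       \<and> (cs y - cs h) / (y - h) \<le> max (- (A1 * cs y) / (1 + A1 * h)) (- (A2 * cs y) / (1 + A2 * h))"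
proof (rule quotient_between)
  let ?l = "lam h" and ?c = "cs h" and ?l' = "lam y" and ?c' = "cs y"
  have l0: "?l > 0" and l'0: "?l' > 0" using lam_pos h y by auto
  show "0 \<le> A1" unfolding A1_def using p_gt L0_pos[of ?l] T1 by simp
  show "0 \<le> A2" unfolding A2_def using p_gt L0_pos[of ?l'] T2 by simp
  have "0 \<le> chi y ?c' ?l - chi h ?c ?l" using chi_cs_nonneg[OF y(1) l0] chi_lam[OF h] by simp
  also have "chi y ?c' ?l - chi h ?c ?l
      = - (?c' - ?c) * ?l + p * L 0 ?l * (exp (- (?l * ?c' * y)) - exp (- (?l * ?c * h)))"
    unfolding chi_def by (simp add: algebra_simps)
  also have "\<dots> = - ?l * ((?c' - ?c) * (1 + A1 * h) + A1 * ?c' * (y - h))"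
    unfolding eq1 A1_def by (simp add: algebra_simps)
  finally show "(?c' - ?c) * (1 + A1 * h) + A1 * ?c' * (y - h) \<le> 0"
    using l0 by (simp add: mult_le_0_iff)
  have "0 \<le> chi h ?c ?l' - chi y ?c' ?l'" using chi_cs_nonneg[OF h l'0] chi_lam[OF y(1)] by simp
  also have "chi h ?c ?l' - chi y ?c' ?l'
      = (?c' - ?c) * ?l' - p * L 0 ?l' * (exp (- (?l' * ?c' * y)) - exp (- (?l' * ?c * h)))"
    unfolding chi_def by (simp add: algebra_simps)
  also have "\<dots> = ?l' * ((?c' - ?c) * (1 + A2 * h) + A2 * ?c' * (y - h))"
    unfolding eq2 A2_def by (simp add: algebra_simps)
  finally show "0 \<le> (?c' - ?c) * (1 + A2 * h) + A2 * ?c' * (y - h)"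
    using l'0 by (simp add: zero_le_mult_iff)
qed (use y h in auto)

lemma cs_deriv: assumes h: "h \<ge> 0" shows "(cs has_real_derivative cs_slope h) (at h within {0..})"
proof -
  let ?F = "at h within {0..}" and ?a = "lam h * cs h * h"
  have csT: "(cs \<longlongrightarrow> cs h) ?F" and lamT: "(lam \<longlongrightarrow> lam h) ?F"
    using cs_tendsto[OF h] lam_tendsto[OF h] .
  have idT: "((\<lambda>y. y) \<longlongrightarrow> h) ?F" by (rule tendsto_ident_at)
  have u1: "((\<lambda>y. lam h * cs y * y) \<longlongrightarrow> ?a) ?F" and u2: "((\<lambda>y. lam y * cs y * y) \<longlongrightarrow> ?a) ?F"
    and v2: "((\<lambda>y. lam y * cs h * h) \<longlongrightarrow> ?a) ?F"
    by (intro tendsto_intros csT idT lamT)+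
  obtain T1 where T1: "\<And>y. T1 y > 0"
      "\<And>y. exp (- (lam h * cs y * y)) - exp (- (lam h * cs h * h)) = - T1 y * (lam h * cs y * y - lam h * cs h * h)"
      "(T1 \<longlongrightarrow> exp (- ?a)) ?F"
    using exp_neg_secant_slopes[OF u1 tendsto_const] by blast
  obtain T2 where T2: "\<And>y. T2 y > 0"
      "\<And>y. exp (- (lam y * cs y * y)) - exp (- (lam y * cs h * h)) = - T2 y * (lam y * cs y * y - lam y * cs h * h)"
      "(T2 \<longlongrightarrow> exp (- ?a)) ?F"
    using exp_neg_secant_slopes[OF u2 v2] by blast
  define A1 where "A1 y = p * L 0 (lam h) * T1 y" for y
  define A2 where "A2 y = p * L 0 (lam y) * T2 y" for y
  have "0 \<le> p * L 0 (lam h) * exp (- ?a) * h" using p_gt L0_pos[of "lam h"] h by simp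
  hence den: "1 + p * L 0 (lam h) * exp (- ?a) * h \<noteq> 0" by linarith
  show ?thesis
  proof (rule has_real_derivative_squeeze)
    show "min (- (A1 y * cs y) / (1 + A1 y * h)) (- (A2 y * cs y) / (1 + A2 y * h)) \<le> (cs y - cs h) / (y - h)
       \<and> (cs y - cs h) / (y - h) \<le> max (- (A1 y * cs y) / (1 + A1 y * h)) (- (A2 y * cs y) / (1 + A2 y * h))"
      if "y \<in> {0..}" "y \<noteq> h" for y
      unfolding A1_def A2_def using that h T1 T2 by (intro cs_quotient_between) auto
    show "((\<lambda>y. - (A1 y * cs y) / (1 + A1 y * h)) \<longlongrightarrow> cs_slope h) ?F"
      unfolding A1_def cs_slope_def using den by (intro tendsto_intros T1(3) csT)
    show "((\<lambda>y. - (A2 y * cs y) / (1 + A2 y * h)) \<longlongrightarrow> cs_slope h) ?F"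
      unfolding A2_def cs_slope_def using den by (intro tendsto_intros T2(3) csT lamT)
  qed
qed

text \<open>The \<open>h\<close>-derivative of \<open>h \<mapsto> \<chi>\<^sub>l(h, c\<^sub>*(h), l)\<close> at \<open>l = \<lambda>(h)\<close>, and the resulting
  derivative of \<open>\<lambda>\<close> by implicit differentiation of \<open>\<chi>\<^sub>l = 0\<close>.\<close>
definition chi_l_dh :: "real \<Rightarrow> real" where
  "chi_l_dh h = - cs_slope h - p * exp (- (lam h * cs h * h)) * (cs_slope h * h + cs h) *
            (lam h * (L 1 (lam h) - cs h * h * L 0 (lam h)) + L 0 (lam h))"

definition lam_slope :: "real \<Rightarrow> real" where
  "lam_slope h = - chi_l_dh h / chi_ll h (cs h) (lam h)"

lemma chi_l_along_deriv: assumes h: "h \<ge> 0"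
  shows "((\<lambda>y. chi_l y (cs y) (lam h)) has_real_derivative chi_l_dh h) (at h within {0..})"
  unfolding chi_l_def chi_l_dh_def
  by (rule derivative_eq_intros cs_deriv[OF h] refl | simp)+ (simp add: algebra_simps)

text \<open>Since \<open>\<chi>\<^sub>l(y, c\<^sub>*(y), \<lambda>(y)) = 0\<close> for all \<open>y\<close>, the mean value theorem in \<open>l\<close> expresses
  the difference quotient of \<open>\<lambda>\<close> through that of \<open>y \<mapsto> \<chi>\<^sub>l(y, c\<^sub>*(y), \<lambda>(h))\<close>, divided by
  \<open>\<chi>\<^sub>l\<^sub>l \<ge> 2\<close> at a point converging to \<open>\<lambda>(h)\<close>.\<close>
lemma lam_deriv: assumes h: "h \<ge> 0" shows "(lam has_real_derivative lam_slope h) (at h within {0..})"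
proof -
  let ?F = "at h within {0..}" and ?l = "lam h" and ?c = "cs h"
  obtain \<eta> where \<eta>: "\<And>y. chi_l y (cs y) (lam y) - chi_l y (cs y) ?l = (lam y - ?l) * chi_ll y (cs y) (\<eta> y)"
    and \<eta>T: "(\<eta> \<longlongrightarrow> ?l) ?F"
    using mvt_points_tendsto[where g = "\<lambda>y t. chi_l y (cs y) t" and g' = "\<lambda>y t. chi_ll y (cs y) t",
          OF chi_l_deriv_l lam_tendsto[OF h]] by blast
  have chi_llT: "((\<lambda>y. chi_ll y (cs y) (\<eta> y)) \<longlongrightarrow> chi_ll h ?c ?l) ?F"
    unfolding chi_ll_def by (intro tendsto_intros \<eta>T cs_tendsto[OF h] tendsto_ident_at)
  have dqT: "((\<lambda>y. (chi_l y (cs y) ?l - chi_l h ?c ?l) / (y - h)) \<longlongrightarrow> chi_l_dh h) ?F"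
    using chi_l_along_deriv[OF h] by (simp add: has_field_derivative_iff)
  have "((\<lambda>y. - ((chi_l y (cs y) ?l - chi_l h ?c ?l) / (y - h)) / chi_ll y (cs y) (\<eta> y)) \<longlongrightarrow> lam_slope h) ?F"
    unfolding lam_slope_def using chi_ll_ge2[of h ?c ?l] by (intro tendsto_intros dqT chi_llT) simp
  moreover have "\<forall>\<^sub>F y in ?F. - ((chi_l y (cs y) ?l - chi_l h ?c ?l) / (y - h)) / chi_ll y (cs y) (\<eta> y)
      = (lam y - lam h) / (y - h)"
    unfolding eventually_at_filter
  proof (intro always_eventually allI impI)
    fix y :: real assume "y \<in> {0..}"
    hence "- (chi_l y (cs y) ?l - chi_l h ?c ?l) = (lam y - ?l) * chi_ll y (cs y) (\<eta> y)"
      using \<eta>[of y] chi_l_lam[of y] chi_l_lam[OF h] by simp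
    moreover have "chi_ll y (cs y) (\<eta> y) \<noteq> 0" using chi_ll_ge2[of y "cs y" "\<eta> y"] by simp
    ultimately show "- ((chi_l y (cs y) ?l - chi_l h ?c ?l) / (y - h)) / chi_ll y (cs y) (\<eta> y)
      = (lam y - lam h) / (y - h)" by (simp add: minus_divide_left)
  qed
  ultimately have "((\<lambda>y. (lam y - lam h) / (y - h)) \<longlongrightarrow> lam_slope h) ?F"
    by (rule Lim_transform_eventually)
  thus ?thesis by (simp add: has_field_derivative_iff)
qed

text \<open>The two slopes written as expressions; only \<open>1 + p L\<^sub>0(\<lambda>) exp(-\<lambda>ch) h\<close> and \<open>\<chi>\<^sub>l\<^sub>l\<close> are
  inverted, and both stay away from zero along the curve.\<close>
definition e_exp :: sexpr where "e_exp = Exp (Uminus (Times (Times V_lam V_c) V_h))"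
definition e_pL0 :: sexpr where "e_pL0 = Times (Const p) (Lap 0 V_lam)"
definition e_den :: sexpr where "e_den = Plus (Const 1) (Times (Times e_pL0 e_exp) V_h)"
definition e_cs_slope :: sexpr where
  "e_cs_slope = Uminus (Times (Times (Times e_pL0 e_exp) V_c) (Inverse e_den))"
definition e_chi_l_dh :: sexpr where
  "e_chi_l_dh = Plus (Uminus e_cs_slope) (Uminus (Times (Times (Times (Const p) e_exp) (Plus (Times e_cs_slope V_h) V_c))
            (Plus (Times V_lam (Plus (Lap 1 V_lam) (Uminus (Times (Times V_c V_h) (Lap 0 V_lam))))) (Lap 0 V_lam))))"
definition e_chi_ll :: sexpr where
  "e_chi_ll = Plus (Const 2) (Times (Times (Const p) e_exp)
     (Plus (Plus (Lap 2 V_lam) (Uminus (Times (Times (Const 2) (Times V_c V_h)) (Lap 1 V_lam))))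
           (Times (Times (Times V_c V_h) (Times V_c V_h)) (Lap 0 V_lam))))"
definition e_lam_slope :: sexpr where "e_lam_slope = Uminus (Times e_chi_l_dh (Inverse e_chi_ll))"

abbreviation sval_at :: "real \<Rightarrow> sexpr \<Rightarrow> real" where
  "sval_at h e \<equiv> sval L (lam h) (cs h) h e"

lemma sval_cs_slope: "sval_at h e_cs_slope = cs_slope h"
  unfolding e_cs_slope_def cs_slope_def by (simp add: e_pL0_def e_den_def e_exp_def divide_inverse)

lemma sval_lam_slope: "sval_at h e_lam_slope = lam_slope h"
proof -
  have "sval_at h e_chi_l_dh = chi_l_dh h"
    unfolding e_chi_l_dh_def chi_l_dh_def sval_cs_slope[symmetric] by (simp add: e_exp_def algebra_simps)
  moreover have "sval_at h e_chi_ll = chi_ll h (cs h) (lam h)"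
    unfolding e_chi_ll_def chi_ll_def by (simp add: e_exp_def power2_eq_square algebra_simps)
  ultimately show ?thesis unfolding e_lam_slope_def lam_slope_def by (simp add: divide_inverse)
qed

lemma inverted_slopes_nonzero: assumes h: "h \<ge> 0"
  and a: "a \<in> inverted V_c \<union> inverted e_lam_slope \<union> inverted e_cs_slope"
  shows "sval_at h a \<noteq> 0"
proof -
  have "a = e_den \<or> a = e_chi_ll"
    using a unfolding e_lam_slope_def e_chi_l_dh_def e_chi_ll_def e_cs_slope_def e_den_def e_pL0_def e_exp_def
    by auto
  thus ?thesis
  proof
    assume "a = e_den"
    have "0 \<le> p * L 0 (lam h) * exp (- (lam h * cs h * h)) * h" using p_gt L0_pos[of "lam h"] h by simp
    thus ?thesis unfolding \<open>a = e_den\<close> e_den_def e_pL0_def e_exp_def by simp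
  next
    assume "a = e_chi_ll"
    thus ?thesis using chi_ll_ge2[of h "cs h" "lam h"] unfolding e_chi_ll_def chi_ll_def e_exp_def
      by (simp add: power2_eq_square algebra_simps)
  qed
qed

text \<open>\<open>c\<^sub>*\<close> has derivatives of every order: the \<open>n\<close>-th one is the value along the curve of
  the \<open>n\<close>-fold symbolic derivative of the variable \<open>V_c\<close>.\<close>
lemma cs_smooth:
  "\<exists>f :: nat \<Rightarrow> real \<Rightarrow> real. f 0 = cs \<and>
        (\<forall>n. \<forall>h\<ge>0. (f n has_real_derivative f (Suc n) h) (at h within {0..}))"
proof (intro exI conjI allI impI)
  define f where "f n h = sval_at h ((sderiv e_lam_slope e_cs_slope ^^ n) V_c)" for n h
  show "f 0 = cs" unfolding f_def by (rule ext) simp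
  fix n :: nat and h :: real assume h: "h \<ge> 0"
  have dl: "(lam has_real_derivative sval_at h e_lam_slope) (at h within {0..})"
    using lam_deriv[OF h] sval_lam_slope by simp
  have dc: "(cs has_real_derivative sval_at h e_cs_slope) (at h within {0..})"
    using cs_deriv[OF h] sval_cs_slope by simp
  have "\<forall>a\<in>inverted ((sderiv e_lam_slope e_cs_slope ^^ n) V_c). sval_at h a \<noteq> 0"
    using inverted_sderiv_iter[of n e_lam_slope e_cs_slope V_c] inverted_slopes_nonzero[OF h] by blast
  from sval_has_derivative[OF L_deriv dl dc this]
  show "(f n has_real_derivative f (Suc n) h) (at h within {0..})"
    unfolding f_def by simp
qed

lemma cs_order_inverse_h:
  "\<exists>C1 C2. 0 < C1 \<and> C1 < C2 \<and> (\<forall>h\<ge>1. C1 / h \<le> cs h \<and> cs h \<le> C2 / h)"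
proof -
  obtain C2 where C2: "C2 > r0" "\<forall>h\<ge>1. cs h < C2 / h" using cs_le_C_over_h by blast
  have "r0 / h \<le> cs h" if "h \<ge> 1" for h using cs_gt_log_large[OF that] unfolding r0_def by simp
  thus ?thesis using r0_pos C2 by (intro exI[of _ r0] exI[of _ C2]) (auto simp: less_imp_le)
qed

end


theorem theorem1:
  fixes K :: "real \<Rightarrow> real" and p :: real
  assumes K_meas: "K \<in> borel_measurable lborel"
    and K_nonneg: "\<And>s. K s \<ge> 0"
    and K_sym: "\<And>s. K s = K (- s)"
    and K_int: "integrable lborel K" "(LINT s|lborel. K s) = 1"
    and K_exp: "\<And>l. integrable lborel (\<lambda>s. K s * exp (l * s))"
    and p_gt: "p > 1"
    and standing_unique: "\<And>h. h \<ge> 0 \<Longrightarrow> \<exists>!(z, \<epsilon>). z > 0 \<and> \<epsilon> > 0 \<and> psi K p h z \<epsilon> = 0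
                 \<and> deriv (\<lambda>y. psi K p h y \<epsilon>) z = 0"
    and standing_largest: "\<And>h. h \<ge> 0 \<Longrightarrow>
                 eps0 K p h = (GREATEST \<epsilon>. \<epsilon> > 0 \<and> (\<exists>z>0. psi K p h z \<epsilon> = 0))"
    and standing_pos: "\<And>h \<epsilon> z. h \<ge> 0 \<Longrightarrow> \<epsilon> > eps0 K p h \<Longrightarrow> z > 0 \<Longrightarrow> psi K p h z \<epsilon> > 0"
  shows
    "(\<exists>f :: nat \<Rightarrow> real \<Rightarrow> real. f 0 = cstar K p \<and>
        (\<forall>n. \<forall>h\<ge>0. (f n has_real_derivative f (Suc n) h) (at h within {0..})))
     \<and> (\<forall>a b. 0 \<le> a \<longrightarrow> a < b \<longrightarrow> cstar K p b < cstar K p a)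
     \<and> k1 K p > 0 \<and> k2 K p > 0
     \<and> (\<forall>h. 0 \<le> h \<and> h \<le> 1 \<longrightarrow>
          2 * sqrt ((p - 1) / (p * (2 * h + h\<^sup>2) + 1)) < cstar K p h
        \<and> 2 * sqrt (ln p) / (1 + h) < cstar K p h
        \<and> cstar K p h < k1 K p / (1 + h)
        \<and> (h > 0 \<longrightarrow> cstar K p h < k2 K p / h))
     \<and> (\<forall>h\<ge>1.
          2 * sqrt ((p - 1) / (p * (2 * h + h\<^sup>2) + 1)) < cstar K p h
        \<and> sqrt (ln p) / h < cstar K p h
        \<and> cstar K p h < k1 K p / 2
        \<and> cstar K p h < k2 K p / sqrt h)
     \<and> (\<exists>C1 C2. 0 < C1 \<and> C1 < C2 \<and> (\<forall>h\<ge>1. C1 / h \<le> cstar K p h \<and> cstar K p h \<le> C2 / h))"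
proof -
  interpret wave_kernel K p
    using K_meas K_nonneg K_sym K_int K_exp p_gt standing_unique standing_pos
    by (rule wave_kernel.intro)
  show ?thesis
    using cs_smooth cs_strict_mono k1_pos k2_pos
      cs_gt_sqrt_ratio cs_gt_log_small cs_lt_k1 cs_lt_k2_small
      cs_gt_log_large cs_lt_k1_large cs_lt_k2_large cs_order_inverse_h
    by auto
qed

end
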